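(* Let $\Phi$ be an $L$-layer ReLU network with weights $W^{(i)}\in\mathbb R^{N_{i-1}\times N_i}$, data $X\in\mathbb R^{m\times N_0}$, alphabet $\mathcal A=\mathcal A_\infty^\delta$, and $p\in\mathbb N$. Let $\Phi(X)=X^{(L)}$ and $\widetilde\Phi(X)=\widetilde X^{(L)}$. (a) If $\Phi$ is quantized by Algorithm 1, then with probability at least $1-\sum_{i=1}^L\sqrt2\,mN_i/N_{i-1}^p$, $$\max_{1\le j\le N_L}\|\Phi(X)_j-\widetilde\Phi(X)_j\|_2\le\sum_{i=0}^{L-1}(2\pi pm\delta^2)^{\frac{L-i}{2}}\Bigl(\prod_{k=i}^{L-1}\log N_k\Bigr)^{1/2}\max_{1\le j\le N_i}\|X^{(i)}_j\|_2.$$ (b) If $\Phi$ is quantized by Algorithm 2 with order $r$, then with probability at least $1-\sum_{i=1}^L\sqrt2\,mN_i/N_{i-1}^p$, $$\max_{1\le j\le N_L}\|\Phi(X)_j-\widetilde\Phi(X)_j\|_2\le\sum_{i=0}^{L-1}\delta\sqrt{2\pi pm\log N_i}\max_{1\le j\le N_i}\|X^{(i)}_j\|_2\prod_{k=i+1}^{L-1}\Bigl(N_k\|W^{(k+1)}\|_{\max}\|P^{(k)}\|_2^{r-1}+\delta\sqrt{2\pi pm\log N_k}\Bigr),$$ where $P^{(k)}:=P_{\widetilde X^{(k)\perp}_{N_k}}\cdots P_{\widetilde X^{(k)\perp}_{1}}$.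
   Context: $\rho(x)=\max\{0,x\}$ acts entrywise. For data $X\in\mathbb R^{m\times N_0}$ (data points as rows): $X^{(0)}=X$, $X^{(i)}=\rho(X^{(i-1)}W^{(i)})$; for quantized weights $Q^{(i)}$: $\widetilde X^{(0)}=X$, $\widetilde X^{(i)}=\rho(\widetilde X^{(i-1)}Q^{(i)})$. $A_j$ is the $j$-th column of $A$, $\|A\|_{\max}=\max_{k,l}|A_{kl}|$; columns of $\widetilde X^{(i)}$ are assumed nonzero; $P_{z^\perp}=I-zz^\top/\|z\|_2^2$. $\mathcal A_\infty^\delta=\{k\delta:k\in\mathbb Z\}$; $\mathcal Q_{\mathrm{StocQ}}(z)$ equals $\lfloor z/\delta\rfloor\delta$ with probability $1-z/\delta+\lfloor z/\delta\rfloor$ and $(\lfloor z/\delta\rfloor+1)\delta$ otherwise, with fresh independent randomness at each call. Phase II for a vector $\widetilde w\in\mathbb R^{N}$ and data $\widetilde Y\in\mathbb R^{m\times N}$: $\widetilde u_0=0$, $\widetilde q_t=\mathcal Q_{\mathrm{StocQ}}(\widetilde w_t+\langle\widetilde Y_t,\widetilde u_{t-1}\rangle/\|\widetilde Y_t\|_2^2)$, $\widetilde u_t=\widetilde u_{t-1}+(\widetilde w_t-\widetilde q_t)\widetilde Y_t$, $t=1,\dots,N$. Perfect alignment: given $Y,\widetilde Y,w$, $\widetilde w$ is a minimizer of $\|z\|_\infty$ subject to $\widetilde Yz=Yw$ (assumed feasible). Order-$r$ alignment: $\hat u_0=0$; for $t=1,\dots,N$, $\widetilde w_t=\langle\widetilde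 Y_t,\hat u_{t-1}+w_tY_t\rangle/\|\widetilde Y_t\|_2^2$, $\hat u_t=\hat u_{t-1}+w_tY_t-\widetilde w_t\widetilde Y_t$; for $t=N+1,\dots,rN$ (indices of $w,\widetilde w,Y,\widetilde Y$ mod $N$), $\hat v_{t-1}=\hat u_{t-1}-w_tY_t+\widetilde w_t\widetilde Y_t$, $\widetilde w_t\leftarrow\langle\widetilde Y_t,\hat v_{t-1}+w_tY_t\rangle/\|\widetilde Y_t\|_2^2$, $\hat u_t=\hat v_{t-1}+w_tY_t-\widetilde w_t\widetilde Y_t$. Algorithm 1: for $i=1,\dots,L$, with $Y=X^{(i-1)},\widetilde Y=\widetilde X^{(i-1)}$, for each column $w=W^{(i)}_j$ compute $\widetilde w$ by perfect alignment, run Phase II on $\widetilde w$ with data $\widetilde Y$, and set $Q^{(i)}_j=\widetilde q$. Algorithm 2: the same with order-$r$ alignment in place of perfect alignment. *)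

theory Defs
  imports "HOL-Probability.Probability"
begin

text \<open>Matrices are functions nat => nat => real (row index, column index) with explicit
  dimensions; only entries inside the stated dimensions are ever read.  All indices are 0-based.\<close>

type_synonym mat = "nat \<Rightarrow> nat \<Rightarrow> real"
type_synonym vec = "nat \<Rightarrow> real"

definition relu :: "real \<Rightarrow> real" where
  "relu x = max 0 x"

definition vnorm :: "nat \<Rightarrow> vec \<Rightarrow> real" where
  "vnorm m x = sqrt (\<Sum>k<m. (x k)\<^sup>2)"

definition col :: "mat \<Rightarrow> nat \<Rightarrow> vec" where
  "col A j = (\<lambda>k. A k j)"

definition max_col_norm :: "nat \<Rightarrow> nat \<Rightarrow> mat \<Rightarrow> real" where
  "max_col_norm m n A = Max ((\<lambda>j. vnorm m (col A j)) ` {..<n})"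

definition max_abs :: "nat \<Rightarrow> nat \<Rightarrow> mat \<Rightarrow> real" where
  "max_abs a b A = Max ((\<lambda>(k,l). \<bar>A k l\<bar>) ` ({..<a} \<times> {..<b}))"

definition linf :: "nat \<Rightarrow> vec \<Rightarrow> real" where
  "linf n z = Max (insert 0 ((\<lambda>j. \<bar>z j\<bar>) ` {..<n}))"

definition matmul :: "nat \<Rightarrow> mat \<Rightarrow> mat \<Rightarrow> mat" where
  "matmul n A B = (\<lambda>k l. \<Sum>j<n. A k j * B j l)"

definition opnorm2 :: "nat \<Rightarrow> mat \<Rightarrow> real" where
  "opnorm2 m P = Sup {vnorm m (\<lambda>k. \<Sum>l<m. P k l * x l) | x. vnorm m x \<le> 1}"

definition proj_perp :: "nat \<Rightarrow> vec \<Rightarrow> mat" where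
  "proj_perp m z = (\<lambda>k l. (if k = l then 1 else 0) - z k * z l / (\<Sum>i<m. (z i)\<^sup>2))"

text \<open>prod_proj m Y n = P_{Y_n perp} ... P_{Y_1 perp} (in 1-based column numbering).\<close>
primrec prod_proj :: "nat \<Rightarrow> mat \<Rightarrow> nat \<Rightarrow> mat" where
  "prod_proj m Y 0 = (\<lambda>k l. if k = l then 1 else 0)"
| "prod_proj m Y (Suc j) = matmul m (proj_perp m (col Y j)) (prod_proj m Y j)"

text \<open>Forward pass: fwd m N W X i = X^{(i)} (m x N i), with W (Suc i) the weight matrix of layer
  Suc i (of size N i x N (Suc i)).\<close>
primrec fwd :: "nat \<Rightarrow> (nat \<Rightarrow> nat) \<Rightarrow> (nat \<Rightarrow> mat) \<Rightarrow> mat \<Rightarrow> nat \<Rightarrow> mat" where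
  "fwd m N W X 0 = X"
| "fwd m N W X (Suc i) = (\<lambda>k l. relu (\<Sum>j<N i. fwd m N W X i k j * W (Suc i) j l))"

text \<open>Stochastic quantizer onto the infinite alphabet {k delta}: rounds down with probability
  1 - z/delta + floor(z/delta), up otherwise.\<close>
definition stocq :: "real \<Rightarrow> real \<Rightarrow> real pmf" where
  "stocq \<delta> z = map_pmf
     (\<lambda>b. if b then (of_int \<lfloor>z / \<delta>\<rfloor> + 1) * \<delta> else of_int \<lfloor>z / \<delta>\<rfloor> * \<delta>)
     (bernoulli_pmf (z / \<delta> - of_int \<lfloor>z / \<delta>\<rfloor>))"

text \<open>Phase II: after t steps, returns (q, u_t) where q j (j < t) are the quantized entries.\<close>
primrec phase2_steps :: "real \<Rightarrow> nat \<Rightarrow> mat \<Rightarrow> vec \<Rightarrow> nat \<Rightarrow> (vec \<times> vec) pmf" where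
  "phase2_steps \<delta> m Yt w 0 = return_pmf (\<lambda>_. 0, \<lambda>_. 0)"
| "phase2_steps \<delta> m Yt w (Suc t) =
     bind_pmf (phase2_steps \<delta> m Yt w t) (\<lambda>(q, u).
       map_pmf (\<lambda>qt. (q(t := qt), \<lambda>k. u k + (w t - qt) * Yt k t))
         (stocq \<delta> (w t + (\<Sum>k<m. Yt k t * u k) / (\<Sum>k<m. (Yt k t)\<^sup>2))))"

definition phase2 :: "real \<Rightarrow> nat \<Rightarrow> nat \<Rightarrow> mat \<Rightarrow> vec \<Rightarrow> vec pmf" where
  "phase2 \<delta> m n Yt w = map_pmf fst (phase2_steps \<delta> m Yt w n)"

text \<open>Quantize the first c columns of a layer independently: wcols j is the (aligned) column j.\<close>
primrec layer_q :: "real \<Rightarrow> nat \<Rightarrow> nat \<Rightarrow> mat \<Rightarrow> (nat \<Rightarrow> vec) \<Rightarrow> nat \<Rightarrow> mat pmf" where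
  "layer_q \<delta> m n Yt wcols 0 = return_pmf (\<lambda>_ _. 0)"
| "layer_q \<delta> m n Yt wcols (Suc c) =
     bind_pmf (layer_q \<delta> m n Yt wcols c) (\<lambda>M.
       map_pmf (\<lambda>q. (\<lambda>l j. if j = c then q l else M l j)) (phase2 \<delta> m n Yt (wcols c)))"

text \<open>Layer-by-layer quantization with a given alignment rule al n Y Yt w (n = number of columns
  of Y and Yt).  qnet ... i returns the random quantized weights Q (Q k for k = 1..i).\<close>
primrec qnet :: "real \<Rightarrow> nat \<Rightarrow> (nat \<Rightarrow> nat) \<Rightarrow> (nat \<Rightarrow> mat) \<Rightarrow> mat
    \<Rightarrow> (nat \<Rightarrow> mat \<Rightarrow> mat \<Rightarrow> vec \<Rightarrow> vec) \<Rightarrow> nat \<Rightarrow> (nat \<Rightarrow> mat) pmf" where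
  "qnet \<delta> m N W X al 0 = return_pmf (\<lambda>_ _ _. 0)"
| "qnet \<delta> m N W X al (Suc i) =
     bind_pmf (qnet \<delta> m N W X al i) (\<lambda>Q.
       map_pmf (\<lambda>M. Q(Suc i := M))
         (layer_q \<delta> m (N i) (fwd m N Q X i)
            (\<lambda>j. al (N i) (fwd m N W X i) (fwd m N Q X i) (col (W (Suc i)) j)) (N (Suc i))))"

definition align_feasible :: "nat \<Rightarrow> nat \<Rightarrow> mat \<Rightarrow> mat \<Rightarrow> vec \<Rightarrow> vec \<Rightarrow> bool" where
  "align_feasible m n Y Yt w z \<longleftrightarrow> (\<forall>j\<ge>n. z j = 0) \<and>
      (\<forall>k<m. (\<Sum>j<n. Yt k j * z j) = (\<Sum>j<n. Y k j * w j))"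

definition perfect_aligned :: "nat \<Rightarrow> nat \<Rightarrow> mat \<Rightarrow> mat \<Rightarrow> vec \<Rightarrow> vec \<Rightarrow> bool" where
  "perfect_aligned m n Y Yt w wt \<longleftrightarrow> align_feasible m n Y Yt w wt \<and>
      (\<forall>z. align_feasible m n Y Yt w z \<longrightarrow> linf n wt \<le> linf n z)"

text \<open>Order-r alignment: ord_align_steps ... t = (wt, u_hat_t) after t steps (1-based step t uses
  column (t-1) mod n).\<close>
primrec ord_align_steps :: "nat \<Rightarrow> nat \<Rightarrow> mat \<Rightarrow> mat \<Rightarrow> vec \<Rightarrow> nat \<Rightarrow> vec \<times> vec" where
  "ord_align_steps m n Y Yt w 0 = (\<lambda>_. 0, \<lambda>_. 0)"
| "ord_align_steps m n Y Yt w (Suc t) =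
     (let (wt, u) = ord_align_steps m n Y Yt w t;
          j = t mod n;
          v = (if t < n then u else (\<lambda>k. u k - w j * Y k j + wt j * Yt k j));
          c = (\<Sum>k<m. Yt k j * (v k + w j * Y k j)) / (\<Sum>k<m. (Yt k j)\<^sup>2)
      in (wt(j := c), \<lambda>k. v k + w j * Y k j - c * Yt k j))"

definition ord_align :: "nat \<Rightarrow> nat \<Rightarrow> nat \<Rightarrow> mat \<Rightarrow> mat \<Rightarrow> vec \<Rightarrow> vec" where
  "ord_align r m n Y Yt w = fst (ord_align_steps m n Y Yt w (r * n))"

definition nonzero_cols :: "nat \<Rightarrow> nat \<Rightarrow> mat \<Rightarrow> bool" where
  "nonzero_cols m n A \<longleftrightarrow> (\<forall>j<n. \<exists>k<m. A k j \<noteq> 0)"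

definition net_err :: "nat \<Rightarrow> (nat \<Rightarrow> nat) \<Rightarrow> (nat \<Rightarrow> mat) \<Rightarrow> (nat \<Rightarrow> mat) \<Rightarrow> mat \<Rightarrow> nat \<Rightarrow> real" where
  "net_err m N W Q X L =
     Max ((\<lambda>j. vnorm m (\<lambda>k. fwd m N W X L k j - fwd m N Q X L k j)) ` {..<N L})"

end

theory Submission
  imports Defs
begin

text \<open>The Phase II residual u_t is a sum of centred stochastic-rounding errors, each step projecting
  the previous residual away from the current column, so u_t is sub-Gaussian with variance proxy
  \<delta>^2 max_j ||Y_j||^2 / 4.  Chernoff bounds in each coordinate and a union bound over the N_i columns
  of a layer bound its quantization error outside an event of probability at most
  sqrt 2 m N_i / N_{i-1}^p.  Outside the union of these events, the error of layer i+1 is at most the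
  alignment error plus the Phase II error, a linear recursion in the column errors: perfect
  alignment contributes nothing, and each of the r - 1 extra passes of order-r alignment contracts
  the alignment residual by the product of projections P^(k).\<close>

section \<open>Vectors and matrices\<close>

definition vinner :: "nat \<Rightarrow> vec \<Rightarrow> vec \<Rightarrow> real" where
  "vinner m a b = (\<Sum>k<m. a k * b k)"

definition matvec :: "nat \<Rightarrow> mat \<Rightarrow> vec \<Rightarrow> vec" where
  "matvec m A x = (\<lambda>k. \<Sum>l<m. A k l * x l)"

lemma vinner_commute: "vinner m a b = vinner m b a"
  unfolding vinner_def by (simp add: mult.commute)

lemma vinner_self_nonneg: "vinner m a a \<ge> 0"
  unfolding vinner_def by (intro sum_nonneg) auto

lemma vinner_col_self: "vinner m (col A j) (col A j) = (\<Sum>k<m. (A k j)\<^sup>2)"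
  unfolding vinner_def col_def by (simp add: power2_eq_square)

lemma vinner_diff_scale_self:
  "vinner m (\<lambda>k. b k - c * y k) (\<lambda>k. b k - c * y k)
     = vinner m b b - 2 * c * vinner m b y + c\<^sup>2 * vinner m y y"
proof -
  have "(\<Sum>k<m. (b k - c * y k) * (b k - c * y k))
      = (\<Sum>k<m. b k * b k - (2 * c) * (b k * y k) + c\<^sup>2 * (y k * y k))"
    by (intro sum.cong) (auto simp: algebra_simps power2_eq_square)
  also have "\<dots> = (\<Sum>k<m. b k * b k) - (2 * c) * (\<Sum>k<m. b k * y k) + c\<^sup>2 * (\<Sum>k<m. y k * y k)"
    by (simp add: sum.distrib sum_subtractf sum_distrib_left)
  finally show ?thesis unfolding vinner_def .
qed

lemma sum_indicator_mult: "(k::nat) < m \<Longrightarrow> (\<Sum>l<m. (if k = l then c else 0) * x l) = c * (x k :: real)"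
proof -
  assume k: "k < m"
  have "(\<Sum>l<m. (if k = l then c else 0) * x l) = (\<Sum>l<m. if l = k then c * x l else 0)"
    by (intro sum.cong) auto
  also have "\<dots> = c * x k" using k by (subst sum.delta) auto
  finally show ?thesis .
qed

lemma vinner_unit_left: "k < m \<Longrightarrow> vinner m (\<lambda>j. if j = k then c else 0) v = c * v k"
proof -
  assume k: "k < m"
  have "(\<Sum>j<m. (if j = k then c else 0) * v j) = (\<Sum>j<m. (if k = j then c else 0) * v j)"
    by (intro sum.cong) auto
  then show ?thesis unfolding vinner_def using sum_indicator_mult[OF k] by simp
qed

lemma vnorm_nonneg: "vnorm m x \<ge> 0"
  unfolding vnorm_def by (intro real_sqrt_ge_zero sum_nonneg) auto

lemma vnorm_sq: "(vnorm m x)\<^sup>2 = vinner m x x"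
  unfolding vnorm_def vinner_def by (simp add: sum_nonneg power2_eq_square)

lemma vnorm_cong: "(\<And>k. k < m \<Longrightarrow> x k = y k) \<Longrightarrow> vnorm m x = vnorm m y"
  unfolding vnorm_def by (intro arg_cong[where f=sqrt] sum.cong) auto

lemma vnorm_zero_fun [simp]: "vnorm m (\<lambda>_. 0) = 0"
  unfolding vnorm_def by simp

lemma vnorm_triangle: "vnorm m (\<lambda>k. x k + y k) \<le> vnorm m x + vnorm m y"
proof -
  have "vnorm m z = L2_set z {..<m}" for z
    unfolding vnorm_def L2_set_def by simp
  then show ?thesis by (simp add: L2_set_triangle_ineq)
qed

lemma vnorm_scale: "vnorm m (\<lambda>k. c * x k) = \<bar>c\<bar> * vnorm m x"
proof -
  have "vnorm m (\<lambda>k. c * x k) = sqrt (c\<^sup>2 * (\<Sum>k<m. (x k)\<^sup>2))"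
    unfolding vnorm_def by (simp add: power_mult_distrib sum_distrib_left)
  then show ?thesis unfolding vnorm_def by (simp add: real_sqrt_mult)
qed

lemma vnorm_minus: "vnorm m (\<lambda>k. - x k) = vnorm m x"
  using vnorm_scale[of m "-1" x] by simp

lemma vnorm_mono_abs:
  assumes "\<And>k. k < m \<Longrightarrow> \<bar>x k\<bar> \<le> \<bar>y k\<bar>"
  shows "vnorm m x \<le> vnorm m y"
  unfolding vnorm_def using assms
  by (intro real_sqrt_le_mono sum_mono) (simp add: abs_le_square_iff)

lemma abs_le_vnorm: "l < m \<Longrightarrow> \<bar>x l\<bar> \<le> vnorm m x"
proof -
  assume l: "l < m"
  have "(x l)\<^sup>2 \<le> (\<Sum>k<m. (x k)\<^sup>2)" using l by (intro member_le_sum) auto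
  then have "sqrt ((x l)\<^sup>2) \<le> vnorm m x" unfolding vnorm_def by (rule real_sqrt_le_mono)
  then show ?thesis by simp
qed

lemma vnorm_le_sqrt_card_mult:
  assumes "\<forall>k<m. \<bar>u k\<bar> \<le> a"
  shows "vnorm m u \<le> sqrt (real m) * a"
proof -
  have a: "a \<ge> 0" if "m > 0" using assms that by force
  have "(\<Sum>k<m. (u k)\<^sup>2) \<le> (\<Sum>k<m. a\<^sup>2)"
  proof (intro sum_mono)
    fix k assume "k \<in> {..<m}"
    then have "\<bar>u k\<bar> \<le> a" using assms by auto
    then show "(u k)\<^sup>2 \<le> a\<^sup>2" using abs_le_square_iff[of "u k" a] by force
  qed
  then have "vnorm m u \<le> sqrt (real m * a\<^sup>2)" unfolding vnorm_def by simp
  also have "\<dots> = sqrt (real m) * a"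
    using a by (cases "m = 0") (auto simp: real_sqrt_mult)
  finally show ?thesis .
qed

lemma max_col_norm_ge: "j < n \<Longrightarrow> vnorm m (col A j) \<le> max_col_norm m n A"
  unfolding max_col_norm_def by (intro Max_ge) auto

lemma max_col_norm_le:
  assumes "n > 0" "\<And>j. j < n \<Longrightarrow> vnorm m (col A j) \<le> B"
  shows "max_col_norm m n A \<le> B"
  unfolding max_col_norm_def using assms by (subst Max_le_iff) auto

lemma max_col_norm_nonneg: "n > 0 \<Longrightarrow> max_col_norm m n A \<ge> 0"
  using max_col_norm_ge[of 0 n m A] vnorm_nonneg[of m "col A 0"] by linarith

lemma col_sq_sum_le_max_col_norm:
  "j < n \<Longrightarrow> (\<Sum>k<m. (A k j)\<^sup>2) \<le> (max_col_norm m n A)\<^sup>2"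
proof -
  assume "j < n"
  then have "(vnorm m (col A j))\<^sup>2 \<le> (max_col_norm m n A)\<^sup>2"
    using max_col_norm_ge vnorm_nonneg by (intro power_mono)
  then show ?thesis by (simp add: vnorm_sq vinner_col_self)
qed

lemma max_abs_ge: "k < a \<Longrightarrow> l < b \<Longrightarrow> \<bar>A k l\<bar> \<le> max_abs a b A"
  unfolding max_abs_def by (rule Max_ge) force+

lemma max_abs_nonneg: "0 < a \<Longrightarrow> 0 < b \<Longrightarrow> max_abs a b A \<ge> 0"
  using max_abs_ge[of 0 a 0 b A] by linarith

lemma nonzero_cols_vinner_pos:
  assumes "nonzero_cols m n A" "j < n"
  shows "vinner m (col A j) (col A j) > 0"
proof -
  obtain k where k: "k < m" "A k j \<noteq> 0" using assms unfolding nonzero_cols_def by auto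
  have "(A k j)\<^sup>2 \<le> (\<Sum>k<m. (A k j)\<^sup>2)" using k by (intro member_le_sum) auto
  moreover have "(A k j)\<^sup>2 > 0" using k by simp
  ultimately show ?thesis unfolding vinner_col_self by linarith
qed

lemma max_col_norm_pos:
  assumes "nonzero_cols m n A" "n > 0"
  shows "max_col_norm m n A > 0"
proof -
  have "0 < (vnorm m (col A 0))\<^sup>2" using nonzero_cols_vinner_pos[OF assms] by (simp add: vnorm_sq)
  then have "0 < vnorm m (col A 0)" using vnorm_nonneg[of m "col A 0"] by (simp add: zero_less_power2)
  then show ?thesis using max_col_norm_ge[OF assms(2), of m A] by linarith
qed

lemma vnorm_proj_le:
  assumes "vinner m y y > 0"
  shows "vnorm m (\<lambda>k. x k - vinner m y x / vinner m y y * y k) \<le> vnorm m x"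
proof -
  have "(vnorm m (\<lambda>k. x k - vinner m y x / vinner m y y * y k))\<^sup>2
      = vinner m x x - (vinner m y x)\<^sup>2 / vinner m y y"
    unfolding vnorm_sq vinner_diff_scale_self using assms
    by (simp add: vinner_commute[of m x y] field_simps power2_eq_square)
  also have "\<dots> \<le> (vnorm m x)\<^sup>2" using assms by (simp add: vnorm_sq)
  finally show ?thesis using vnorm_nonneg[of m x] by (simp add: power2_le_iff_abs_le)
qed

lemma matvec_cong: "(\<And>k. k < m \<Longrightarrow> x k = y k) \<Longrightarrow> matvec m A x = matvec m A y"
  unfolding matvec_def by (auto intro!: sum.cong)

lemma matvec_matmul: "matvec m (matmul m A B) x = matvec m A (matvec m B x)"
proof -
  have "(\<Sum>l<m. (\<Sum>j<m. A k j * B j l) * x l) = (\<Sum>j<m. A k j * (\<Sum>l<m. B j l * x l))" for k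
  proof -
    have "(\<Sum>l<m. (\<Sum>j<m. A k j * B j l) * x l) = (\<Sum>l<m. \<Sum>j<m. A k j * B j l * x l)"
      by (simp add: sum_distrib_right)
    also have "\<dots> = (\<Sum>j<m. \<Sum>l<m. A k j * B j l * x l)" by (rule sum.swap)
    also have "\<dots> = (\<Sum>j<m. A k j * (\<Sum>l<m. B j l * x l))"
      by (simp add: sum_distrib_left mult.assoc)
    finally show ?thesis .
  qed
  then show ?thesis unfolding matvec_def matmul_def by simp
qed

lemma matvec_id: "k < m \<Longrightarrow> matvec m (\<lambda>k l. if k = l then 1 else 0) x k = x k"
  unfolding matvec_def using sum_indicator_mult[of k m 1 x] by simp

lemma matvec_proj_perp:
  "k < m \<Longrightarrow> matvec m (proj_perp m y) x k = x k - vinner m y x / vinner m y y * y k"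
proof -
  assume k: "k < m"
  have "matvec m (proj_perp m y) x k
      = (\<Sum>l<m. (if k = l then 1 else 0) * x l) - (\<Sum>l<m. y k * y l / vinner m y y * x l)"
    unfolding matvec_def proj_perp_def vinner_def
    by (simp add: power2_eq_square left_diff_distrib sum_subtractf)
  also have "(\<Sum>l<m. y k * y l / vinner m y y * x l) = vinner m y x / vinner m y y * y k"
    unfolding vinner_def by (simp add: sum_distrib_left sum_divide_distrib ac_simps)
  finally show ?thesis using sum_indicator_mult[OF k, of 1 x] by simp
qed

lemma opnorm2_bdd: "bdd_above {vnorm m (\<lambda>k. \<Sum>l<m. P k l * x l) | x. vnorm m x \<le> 1}"
proof -
  define R where "R = (\<lambda>k. \<Sum>l<m. \<bar>P k l\<bar>)"
  have "vnorm m (\<lambda>k. \<Sum>l<m. P k l * x l) \<le> vnorm m R" if x: "vnorm m x \<le> 1" for x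
  proof (rule vnorm_mono_abs)
    fix k
    have "\<bar>\<Sum>l<m. P k l * x l\<bar> \<le> (\<Sum>l<m. \<bar>P k l\<bar> * \<bar>x l\<bar>)"
      by (rule order.trans[OF sum_abs]) (simp add: abs_mult)
    also have "\<dots> \<le> (\<Sum>l<m. \<bar>P k l\<bar> * 1)"
      using abs_le_vnorm[of _ m x] x by (intro sum_mono mult_left_mono) force+
    finally show "\<bar>\<Sum>l<m. P k l * x l\<bar> \<le> \<bar>R k\<bar>" unfolding R_def by simp
  qed
  then show ?thesis by (auto intro!: bdd_aboveI)
qed

lemma opnorm2_ge:
  "vnorm m x \<le> 1 \<Longrightarrow> vnorm m (matvec m P x) \<le> opnorm2 m P"
  unfolding opnorm2_def matvec_def by (rule cSup_upper[OF _ opnorm2_bdd]) auto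

lemma opnorm2_nonneg: "opnorm2 m P \<ge> 0"
  using opnorm2_ge[of m "\<lambda>_. 0" P] by (simp add: matvec_def)

lemma vnorm_matvec_le: "vnorm m (matvec m P x) \<le> opnorm2 m P * vnorm m x"
proof (cases "vnorm m x = 0")
  case True
  then have "matvec m P x = matvec m P (\<lambda>_. 0)"
    using abs_le_vnorm[of _ m x] by (intro matvec_cong) force
  then show ?thesis using True by (simp add: matvec_def)
next
  case False
  then have pos: "vnorm m x > 0" using vnorm_nonneg[of m x] by simp
  define x' where "x' = (\<lambda>k. (1 / vnorm m x) * x k)"
  have "vnorm m x' = 1" unfolding x'_def vnorm_scale using pos by simp
  then have le: "vnorm m (matvec m P x') \<le> opnorm2 m P" by (intro opnorm2_ge) simp
  have "matvec m P x' = (\<lambda>k. (1 / vnorm m x) * matvec m P x k)"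
    unfolding x'_def matvec_def by (simp add: sum_distrib_left ac_simps)
  then have "vnorm m (matvec m P x') = vnorm m (matvec m P x) / vnorm m x"
    using pos by (simp only: vnorm_scale) simp
  then have "vnorm m (matvec m P x) = vnorm m (matvec m P x') * vnorm m x"
    using pos by (simp add: field_simps)
  also have "\<dots> \<le> opnorm2 m P * vnorm m x" using le pos by (intro mult_right_mono) auto
  finally show ?thesis .
qed

lemma relu_dist_le: "\<bar>relu a - relu b\<bar> \<le> \<bar>a - b\<bar>"
  unfolding relu_def by (cases "0 \<le> a"; cases "0 \<le> b") (auto simp: max_def)

section \<open>Stochastic rounding and Phase II\<close>

lemma stocq_set_pmf_subset:
  "set_pmf (stocq \<delta> z) \<subseteq> {of_int \<lfloor>z / \<delta>\<rfloor> * \<delta>, (of_int \<lfloor>z / \<delta>\<rfloor> + 1) * \<delta>}"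
  unfolding stocq_def by auto

lemma stocq_unbiased:
  assumes "\<delta> > 0"
  shows "measure_pmf.expectation (stocq \<delta> z) (\<lambda>q. q - z) = 0"
proof -
  define F where "F = real_of_int \<lfloor>z / \<delta>\<rfloor>"
  define \<theta> where "\<theta> = z / \<delta> - F"
  have \<theta>: "0 \<le> \<theta>" "\<theta> \<le> 1" unfolding \<theta>_def F_def
    using floor_correct[of "z/\<delta>"] by linarith+
  have "measure_pmf.expectation (stocq \<delta> z) (\<lambda>q. q - z)
     = ((F + 1) * \<delta> - z) * \<theta> + (F * \<delta> - z) * (1 - \<theta>)"
    unfolding stocq_def using \<theta> by (simp add: F_def \<theta>_def)
  also have "\<dots> = F * \<delta> + \<theta> * \<delta> - z" by (simp add: algebra_simps)
  also have "\<dots> = 0" using assms unfolding \<theta>_def by (simp add: field_simps)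
  finally show ?thesis .
qed

text \<open>Hoeffding's lemma: the rounding error is centred and confined to an interval of length \<delta>.\<close>
lemma stocq_mgf_le:
  assumes d: "\<delta> > 0"
  shows "(\<integral>\<^sup>+q. ennreal (exp (s * (q - z))) \<partial>stocq \<delta> z) \<le> ennreal (exp (s\<^sup>2 * \<delta>\<^sup>2 / 8))"
proof -
  define a where "a = real_of_int \<lfloor>z / \<delta>\<rfloor> * \<delta> - z"
  have supp: "\<And>q. q \<in> set_pmf (stocq \<delta> z) \<Longrightarrow> q - z \<in> {a..a+\<delta>}"
    using stocq_set_pmf_subset[of \<delta> z] d unfolding a_def by (auto simp: algebra_simps)
  interpret up: interval_bounded_random_variable "measure_pmf (stocq \<delta> z)" "\<lambda>q. q - z" a "a + \<delta>"
  proof unfold_locales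
    show "AE q in measure_pmf (stocq \<delta> z). q - z \<in> {a..a + \<delta>}"
      unfolding AE_measure_pmf_iff using supp by blast
  qed simp
  interpret down: interval_bounded_random_variable "measure_pmf (stocq \<delta> z)" "\<lambda>q. z - q" "-a-\<delta>" "-a"
  proof unfold_locales
    show "AE q in measure_pmf (stocq \<delta> z). z - q \<in> {-a-\<delta>..-a}"
      unfolding AE_measure_pmf_iff using supp by force
  qed simp
  have "measure_pmf.expectation (stocq \<delta> z) (\<lambda>q. z - q)
      = - measure_pmf.expectation (stocq \<delta> z) (\<lambda>q. q - z)"
    by (subst integral_minus[symmetric]) simp
  then have down_mean: "measure_pmf.expectation (stocq \<delta> z) (\<lambda>q. z - q) = 0"
    using stocq_unbiased[OF d] by simp
  consider "s > 0" | "s = 0" | "s < 0" by linarith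
  then show ?thesis
  proof cases
    case 1
    from up.Hoeffdings_lemma_nn_integral_0[OF 1 stocq_unbiased[OF d]] show ?thesis by simp
  next
    case 2
    then show ?thesis by (simp add: measure_pmf.emeasure_space_1)
  next
    case 3
    then have "-s > 0" by simp
    from down.Hoeffdings_lemma_nn_integral_0[OF this down_mean] show ?thesis
      by (simp add: algebra_simps)
  qed
qed

text \<open>One Phase II step: the new residual is u + (w_t - q_t) Y_t, and q_t - z is the centred rounding
  error, so the test direction b loses its component along Y_t at the cost of a Hoeffding factor.\<close>
lemma phase2_step_mgf_le:
  fixes b u w :: vec and Yt :: mat and m t :: nat
  assumes d: "\<delta> > 0" and S: "S > 0"
  defines "\<beta> \<equiv> vinner m b (col Yt t)"
  shows "(\<integral>\<^sup>+qt. ennreal (exp (vinner m b (\<lambda>k. u k + (w t - qt) * Yt k t)))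
            \<partial>stocq \<delta> (w t + (\<Sum>k<m. Yt k t * u k) / S))
       \<le> ennreal (exp (vinner m (\<lambda>k. b k - \<beta> / S * Yt k t) u)) * ennreal (exp (\<beta>\<^sup>2 * \<delta>\<^sup>2 / 8))"
proof -
  define z where "z = w t + (\<Sum>k<m. Yt k t * u k) / S"
  define b' where "b' = (\<lambda>k. b k - \<beta> / S * Yt k t)"
  have step: "vinner m b (\<lambda>k. u k + (w t - qt) * Yt k t) = vinner m b u + (w t - qt) * \<beta>" for qt
    unfolding vinner_def \<beta>_def col_def
    by (simp add: distrib_left sum.distrib sum_distrib_left ac_simps)
  have proj: "vinner m b' u = vinner m b u - \<beta> / S * (\<Sum>k<m. Yt k t * u k)"
    unfolding vinner_def b'_def by (simp add: algebra_simps sum_subtractf sum_distrib_left)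
  have split: "vinner m b (\<lambda>k. u k + (w t - qt) * Yt k t) = vinner m b' u + (- \<beta>) * (qt - z)"
    for qt using S unfolding step proj z_def by (simp add: field_simps)
  have "(\<integral>\<^sup>+qt. ennreal (exp (vinner m b (\<lambda>k. u k + (w t - qt) * Yt k t))) \<partial>stocq \<delta> z)
      = (\<integral>\<^sup>+qt. ennreal (exp (vinner m b' u)) * ennreal (exp ((- \<beta>) * (qt - z))) \<partial>stocq \<delta> z)"
    unfolding split by (simp add: ennreal_mult[symmetric] mult_exp_exp)
  also have "\<dots> = ennreal (exp (vinner m b' u)) * (\<integral>\<^sup>+qt. ennreal (exp ((- \<beta>) * (qt - z))) \<partial>stocq \<delta> z)"
    by (rule nn_integral_cmult) simp
  also have "\<dots> \<le> ennreal (exp (vinner m b' u)) * ennreal (exp ((-\<beta>)\<^sup>2 * \<delta>\<^sup>2 / 8))"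
    by (intro mult_left_mono stocq_mgf_le d) simp
  finally show ?thesis unfolding z_def b'_def by simp
qed

lemma phase2_steps_mgf_le:
  assumes d: "\<delta> > 0" and t: "t \<le> n"
    and cols: "\<forall>t<n. (\<Sum>k<m. (Yt k t)\<^sup>2) > 0"
    and M: "\<forall>t<n. (\<Sum>k<m. (Yt k t)\<^sup>2) \<le> M\<^sup>2"
  shows "(\<integral>\<^sup>+x. ennreal (exp (vinner m b (snd x))) \<partial>phase2_steps \<delta> m Yt w t)
           \<le> ennreal (exp (\<delta>\<^sup>2 * M\<^sup>2 * vinner m b b / 8))"
  using t
proof (induction t arbitrary: b)
  case 0
  have "0 \<le> \<delta>\<^sup>2 * M\<^sup>2 * vinner m b b / 8" using vinner_self_nonneg[of m b] by simp
  then show ?case by (simp add: vinner_def)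
next
  case (Suc t)
  define S where "S = (\<Sum>k<m. (Yt k t)\<^sup>2)"
  have S: "S > 0" "S \<le> M\<^sup>2" using Suc.prems cols M unfolding S_def by auto
  define \<beta> where "\<beta> = vinner m b (col Yt t)"
  define b' where "b' = (\<lambda>k. b k - \<beta> / S * Yt k t)"
  have bb: "vinner m b' b' = vinner m b b - \<beta>\<^sup>2 / S"
  proof -
    have "vinner m (col Yt t) (col Yt t) = S" unfolding vinner_col_self S_def ..
    then show ?thesis
      unfolding b'_def using vinner_diff_scale_self[of m b "\<beta> / S" "col Yt t"] S
      by (simp add: \<beta>_def col_def field_simps power2_eq_square)
  qed
  have "(\<integral>\<^sup>+x. ennreal (exp (vinner m b (snd x))) \<partial>phase2_steps \<delta> m Yt w (Suc t))
     = (\<integral>\<^sup>+x. (\<integral>\<^sup>+qt. ennreal (exp (vinner m b (\<lambda>k. snd x k + (w t - qt) * Yt k t)))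
            \<partial>stocq \<delta> (w t + (\<Sum>k<m. Yt k t * snd x k) / S)) \<partial>phase2_steps \<delta> m Yt w t)"
    by (simp add: split_beta S_def)
  also have "\<dots> \<le> (\<integral>\<^sup>+x. ennreal (exp (vinner m b' (snd x))) * ennreal (exp (\<beta>\<^sup>2 * \<delta>\<^sup>2 / 8))
            \<partial>phase2_steps \<delta> m Yt w t)"
    unfolding b'_def \<beta>_def by (intro nn_integral_mono phase2_step_mgf_le[OF d S(1)])
  also have "\<dots> = (\<integral>\<^sup>+x. ennreal (exp (vinner m b' (snd x))) \<partial>phase2_steps \<delta> m Yt w t)
                   * ennreal (exp (\<beta>\<^sup>2 * \<delta>\<^sup>2 / 8))"
    by (rule nn_integral_multc) simp
  also have "\<dots> \<le> ennreal (exp (\<delta>\<^sup>2 * M\<^sup>2 * vinner m b' b' / 8)) * ennreal (exp (\<beta>\<^sup>2 * \<delta>\<^sup>2 / 8))"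
    using Suc.prems by (intro mult_right_mono Suc.IH) auto
  also have "\<dots> = ennreal (exp (\<delta>\<^sup>2 * M\<^sup>2 * vinner m b' b' / 8 + \<beta>\<^sup>2 * \<delta>\<^sup>2 / 8))"
    by (simp add: exp_add ennreal_mult)
  also have "\<dots> \<le> ennreal (exp (\<delta>\<^sup>2 * M\<^sup>2 * vinner m b b / 8))"
  proof -
    have "\<beta>\<^sup>2 * S \<le> \<beta>\<^sup>2 * M\<^sup>2" using S by (intro mult_left_mono) auto
    then have "\<beta>\<^sup>2 \<le> M\<^sup>2 * \<beta>\<^sup>2 / S" using S by (simp add: field_simps)
    then have "\<delta>\<^sup>2 * \<beta>\<^sup>2 \<le> \<delta>\<^sup>2 * (M\<^sup>2 * \<beta>\<^sup>2 / S)" by (intro mult_left_mono) auto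
    then show ?thesis unfolding bb by (intro ennreal_leI) (simp add: field_simps)
  qed
  finally show ?case .
qed

lemma phase2_steps_residual:
  "x \<in> set_pmf (phase2_steps \<delta> m Yt w t) \<Longrightarrow> snd x = (\<lambda>k. \<Sum>s<t. Yt k s * (w s - fst x s))"
proof (induction t arbitrary: x)
  case 0
  then show ?case by simp
next
  case (Suc t)
  from Suc.prems obtain q u qt where qu: "(q, u) \<in> set_pmf (phase2_steps \<delta> m Yt w t)"
    and x: "x = (q(t := qt), \<lambda>k. u k + (w t - qt) * Yt k t)"
    by (auto simp: split_beta)
  have "(\<Sum>s<t. Yt k s * (w s - (q(t := qt)) s)) = (\<Sum>s<t. Yt k s * (w s - q s))" for k
    by (intro sum.cong) auto
  then show ?case using Suc.IH[OF qu] unfolding x by (auto simp: fun_eq_iff)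
qed

lemma emeasure_pmf_exp_markov:
  fixes g :: "'a \<Rightarrow> real"
  assumes l: "l \<ge> 0"
  shows "emeasure (measure_pmf P) {x. a \<le> g x}
          \<le> ennreal (exp (- l * a)) * (\<integral>\<^sup>+x. ennreal (exp (l * g x)) \<partial>P)"
proof -
  have "emeasure (measure_pmf P) {x. a \<le> g x} = (\<integral>\<^sup>+x. indicator {x. a \<le> g x} x \<partial>P)"
    by simp
  also have "\<dots> \<le> (\<integral>\<^sup>+x. ennreal (exp (- l * a)) * ennreal (exp (l * g x)) \<partial>P)"
  proof (intro nn_integral_mono)
    fix x
    have "indicator {x. a \<le> g x} x \<le> ennreal (exp (l * (g x - a)))"
    proof (cases "a \<le> g x")
      case True
      then have "1 \<le> exp (l * (g x - a))" using l by simp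
      then show ?thesis using True by (simp add: ennreal_leI)
    qed simp
    then show "indicator {x. a \<le> g x} x \<le> ennreal (exp (- l * a)) * ennreal (exp (l * g x))"
      by (simp add: ennreal_mult[symmetric] mult_exp_exp algebra_simps)
  qed
  also have "\<dots> = ennreal (exp (- l * a)) * (\<integral>\<^sup>+x. ennreal (exp (l * g x)) \<partial>P)"
    by (rule nn_integral_cmult) simp
  finally show ?thesis .
qed

lemma phase2_steps_coord_tail:
  assumes d: "\<delta> > 0" and M: "M > 0"
    and cols: "\<forall>t<n. (\<Sum>k<m. (Yt k t)\<^sup>2) > 0"
    and bound: "\<forall>t<n. (\<Sum>k<m. (Yt k t)\<^sup>2) \<le> M\<^sup>2"
    and k: "k < m" and s: "\<bar>s\<bar> = 1" and \<alpha>: "\<alpha> \<ge> 0"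
  shows "emeasure (measure_pmf (phase2_steps \<delta> m Yt w n)) {x. \<alpha> \<le> s * snd x k}
           \<le> ennreal (exp (- 2 * \<alpha>\<^sup>2 / (\<delta>\<^sup>2 * M\<^sup>2)))"
proof -
  define l where "l = 4 * \<alpha> / (\<delta>\<^sup>2 * M\<^sup>2)"
  have l: "l \<ge> 0" unfolding l_def using \<alpha> by simp
  define b where "b = (\<lambda>j. if j = k then l * s else 0)"
  have "s * s = 1" using abs_mult_self_eq[of s] s by simp
  then have bb: "vinner m b b = l\<^sup>2"
    unfolding b_def vinner_unit_left[OF k] by (simp add: power2_eq_square)
  have "emeasure (measure_pmf (phase2_steps \<delta> m Yt w n)) {x. \<alpha> \<le> s * snd x k}
      \<le> ennreal (exp (- l * \<alpha>)) * (\<integral>\<^sup>+x. ennreal (exp (l * (s * snd x k))) \<partial>phase2_steps \<delta> m Yt w n)"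
    by (rule emeasure_pmf_exp_markov[OF l])
  also have "(\<integral>\<^sup>+x. ennreal (exp (l * (s * snd x k))) \<partial>phase2_steps \<delta> m Yt w n)
      = (\<integral>\<^sup>+x. ennreal (exp (vinner m b (snd x))) \<partial>phase2_steps \<delta> m Yt w n)"
    unfolding b_def vinner_unit_left[OF k] by (simp add: mult.assoc)
  also have "\<dots> \<le> ennreal (exp (\<delta>\<^sup>2 * M\<^sup>2 * l\<^sup>2 / 8))"
    using phase2_steps_mgf_le[OF d order.refl cols bound, where b=b and w=w] unfolding bb .
  finally have "emeasure (measure_pmf (phase2_steps \<delta> m Yt w n)) {x. \<alpha> \<le> s * snd x k}
     \<le> ennreal (exp (- l * \<alpha> + \<delta>\<^sup>2 * M\<^sup>2 * l\<^sup>2 / 8))"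
    by (simp add: mult_left_mono ennreal_mult[symmetric] mult_exp_exp)
  also have "- l * \<alpha> + \<delta>\<^sup>2 * M\<^sup>2 * l\<^sup>2 / 8 = - 2 * \<alpha>\<^sup>2 / (\<delta>\<^sup>2 * M\<^sup>2)"
    unfolding l_def using d M by (simp add: field_simps power2_eq_square)
  finally show ?thesis .
qed

lemma phase2_steps_norm_tail:
  assumes d: "\<delta> > 0" and M: "M > 0"
    and cols: "\<forall>t<n. (\<Sum>k<m. (Yt k t)\<^sup>2) > 0"
    and bound: "\<forall>t<n. (\<Sum>k<m. (Yt k t)\<^sup>2) \<le> M\<^sup>2"
    and \<alpha>: "\<alpha> \<ge> 0"
  shows "measure_pmf.prob (phase2_steps \<delta> m Yt w n) {x. sqrt (real m) * \<alpha> < vnorm m (snd x)}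
           \<le> 2 * real m * exp (- 2 * \<alpha>\<^sup>2 / (\<delta>\<^sup>2 * M\<^sup>2))"
proof -
  let ?P = "phase2_steps \<delta> m Yt w n"
  define A where "A = (\<lambda>(k::nat, b::bool). {x::vec \<times> vec. \<alpha> \<le> (if b then 1 else -1) * snd x k})"
  have "{x. sqrt (real m) * \<alpha> < vnorm m (snd x)} \<subseteq> (\<Union>i\<in>{..<m} \<times> UNIV. A i)"
  proof (rule subsetI, rule ccontr)
    fix x assume x: "x \<in> {x. sqrt (real m) * \<alpha> < vnorm m (snd x)}" "x \<notin> (\<Union>i\<in>{..<m} \<times> UNIV. A i)"
    have "\<forall>k<m. \<bar>snd x k\<bar> \<le> \<alpha>"
    proof (intro allI impI)
      fix k assume "k < m"
      then have "x \<notin> A (k, True)" "x \<notin> A (k, False)" using x(2) by blast+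
      then show "\<bar>snd x k\<bar> \<le> \<alpha>" unfolding A_def by auto
    qed
    then show False using vnorm_le_sqrt_card_mult[of m "snd x" \<alpha>] x(1) by simp
  qed
  then have "measure_pmf.prob ?P {x. sqrt (real m) * \<alpha> < vnorm m (snd x)}
      \<le> measure_pmf.prob ?P (\<Union>i\<in>{..<m} \<times> UNIV. A i)"
    by (rule measure_pmf.finite_measure_mono) simp
  also have "\<dots> \<le> (\<Sum>i\<in>{..<m} \<times> UNIV. measure_pmf.prob ?P (A i))"
    by (rule measure_pmf.finite_measure_subadditive_finite) auto
  also have "\<dots> \<le> (\<Sum>i\<in>{..<m} \<times> (UNIV::bool set). exp (- 2 * \<alpha>\<^sup>2 / (\<delta>\<^sup>2 * M\<^sup>2)))"
  proof (intro sum_mono)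
    fix i :: "nat \<times> bool" assume i: "i \<in> {..<m} \<times> UNIV"
    obtain k b where kb: "i = (k, b)" by force
    have "emeasure (measure_pmf ?P) (A i) \<le> ennreal (exp (- 2 * \<alpha>\<^sup>2 / (\<delta>\<^sup>2 * M\<^sup>2)))"
      unfolding kb A_def using i kb \<alpha>
      by (simp only: prod.case) (rule phase2_steps_coord_tail[OF d M cols bound], auto)
    then show "measure_pmf.prob ?P (A i) \<le> exp (- 2 * \<alpha>\<^sup>2 / (\<delta>\<^sup>2 * M\<^sup>2))"
      by (simp add: measure_pmf.emeasure_eq_measure)
  qed
  also have "\<dots> = 2 * real m * exp (- 2 * \<alpha>\<^sup>2 / (\<delta>\<^sup>2 * M\<^sup>2))"
    by (simp add: card_cartesian_product)
  finally show ?thesis .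
qed

lemma two_exp_neg_four_pi_le:
  assumes n: "n \<ge> 2" and p: "p \<ge> 1"
  shows "2 * exp (- (4 * pi) * (real p * ln (real n))) \<le> sqrt 2 / real n ^ p"
proof -
  define P where "P = real n ^ p"
  have P: "P \<ge> 2"
  proof -
    have "real 2 ^ 1 \<le> real n ^ 1" using n by simp
    also have "\<dots> \<le> real n ^ p" using p n by (intro power_increasing) auto
    finally show ?thesis unfolding P_def by simp
  qed
  have expP: "exp (real p * ln (real n)) = P"
    unfolding P_def using n by (simp add: exp_of_nat_mult)
  have "exp (- (4 * pi) * (real p * ln (real n))) \<le> exp (- 2 * (real p * ln (real n)))"
    using n pi_gt3 by (intro exp_le_cancel_iff[THEN iffD2] mult_right_mono) auto
  also have "\<dots> = 1 / P\<^sup>2"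
  proof -
    define X where "X = real p * ln (real n)"
    have "exp (- 2 * X) * (exp X * exp X) = 1" by (simp add: mult_exp_exp)
    then show ?thesis using expP P unfolding X_def[symmetric] by (simp add: field_simps power2_eq_square)
  qed
  finally have "2 * exp (- (4 * pi) * (real p * ln (real n))) \<le> 2 / P\<^sup>2" by simp
  also have "\<dots> \<le> 1 / P" using P by (simp add: field_simps power2_eq_square)
  also have "\<dots> \<le> sqrt 2 / P" using P by (simp add: divide_right_mono)
  finally show ?thesis unfolding P_def .
qed

definition quant_err :: "nat \<Rightarrow> nat \<Rightarrow> mat \<Rightarrow> vec \<Rightarrow> vec \<Rightarrow> real" where
  "quant_err m n Yt w q = vnorm m (\<lambda>k. \<Sum>l<n. Yt k l * (w l - q l))"

definition quant_thr :: "real \<Rightarrow> nat \<Rightarrow> nat \<Rightarrow> nat \<Rightarrow> mat \<Rightarrow> real" where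
  "quant_thr \<delta> p m n Yt = \<delta> * sqrt (2 * pi * real p * real m * ln (real n)) * max_col_norm m n Yt"

lemma phase2_prob_quant_err:
  "measure_pmf.prob (phase2 \<delta> m n Yt w) {q. a < quant_err m n Yt w q}
     = measure_pmf.prob (phase2_steps \<delta> m Yt w n) {x. a < vnorm m (snd x)}"
proof -
  let ?P = "phase2_steps \<delta> m Yt w n"
  have residual: "fst -` {q. a < quant_err m n Yt w q} \<inter> set_pmf ?P = {x. a < vnorm m (snd x)} \<inter> set_pmf ?P"
    using phase2_steps_residual[of _ \<delta> m Yt w n] by (auto simp: quant_err_def)
  have "measure_pmf.prob (phase2 \<delta> m n Yt w) {q. a < quant_err m n Yt w q}
      = measure_pmf.prob ?P (fst -` {q. a < quant_err m n Yt w q} \<inter> set_pmf ?P)"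
    unfolding phase2_def by (simp add: measure_Int_set_pmf)
  also have "\<dots> = measure_pmf.prob ?P {x. a < vnorm m (snd x)}"
    unfolding residual by (simp add: measure_Int_set_pmf)
  finally show ?thesis .
qed

lemma phase2_tail:
  assumes d: "\<delta> > 0" and n: "n > 0" and nz: "nonzero_cols m n Yt"
  shows "measure_pmf.prob (phase2 \<delta> m n Yt w) {q. quant_thr \<delta> p m n Yt < quant_err m n Yt w q}
           \<le> sqrt 2 * real m / real n ^ p"
proof (cases "m = 0 \<or> 1 \<le> sqrt 2 * real m / real n ^ p")
  case True
  then show ?thesis
  proof
    assume "m = 0"
    then show ?thesis by (simp add: quant_thr_def quant_err_def vnorm_def)
  next
    assume "1 \<le> sqrt 2 * real m / real n ^ p"
    then show ?thesis
      using measure_pmf.prob_le_1[of "phase2 \<delta> m n Yt w" "{q. quant_thr \<delta> p m n Yt < quant_err m n Yt w q}"]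
      by linarith
  qed
next
  case False
  then have "sqrt 2 \<le> sqrt 2 * real m" "sqrt 2 * real m < real n ^ p" using n by (auto simp: field_simps)
  then have np: "1 < real n ^ p" using less_le_trans[of 1 "sqrt 2"] by fastforce
  have p: "p \<ge> 1" using np by (cases p) auto
  have n2: "n \<ge> 2" using np n by (cases "n = 1") auto
  define M where "M = max_col_norm m n Yt"
  have M: "M > 0" unfolding M_def by (rule max_col_norm_pos[OF nz n])
  have cols: "\<forall>t<n. (\<Sum>k<m. (Yt k t)\<^sup>2) > 0"
    using nonzero_cols_vinner_pos[OF nz] by (simp add: vinner_col_self)
  have bound: "\<forall>t<n. (\<Sum>k<m. (Yt k t)\<^sup>2) \<le> M\<^sup>2"
    unfolding M_def using col_sq_sum_le_max_col_norm by blast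
  have lnn: "ln (real n) > 0" using n2 by simp
  define \<alpha> where "\<alpha> = \<delta> * M * sqrt (2 * pi * real p * ln (real n))"
  have \<alpha>: "\<alpha> \<ge> 0" unfolding \<alpha>_def using d M lnn by simp
  have thr: "quant_thr \<delta> p m n Yt = sqrt (real m) * \<alpha>"
    unfolding quant_thr_def \<alpha>_def M_def by (simp add: real_sqrt_mult[symmetric] ac_simps)
  have expo: "- 2 * \<alpha>\<^sup>2 / (\<delta>\<^sup>2 * M\<^sup>2) = - (4 * pi) * (real p * ln (real n))"
    unfolding \<alpha>_def using d M lnn by (simp add: power_mult_distrib field_simps)
  have "measure_pmf.prob (phase2 \<delta> m n Yt w) {q. quant_thr \<delta> p m n Yt < quant_err m n Yt w q}
      \<le> real m * (2 * exp (- (4 * pi) * (real p * ln (real n))))"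
    using phase2_steps_norm_tail[OF d M cols bound \<alpha>, of w]
    unfolding thr phase2_prob_quant_err expo by simp
  also have "\<dots> \<le> real m * (sqrt 2 / real n ^ p)"
    by (intro mult_left_mono two_exp_neg_four_pi_le n2 p) simp
  finally show ?thesis by (simp add: mult.commute)
qed

section \<open>One layer at a time\<close>

definition restr_layers :: "nat \<Rightarrow> (nat \<Rightarrow> mat) \<Rightarrow> (nat \<Rightarrow> mat)" where
  "restr_layers i Q = (\<lambda>k. if k \<le> i then Q k else (\<lambda>_ _. 0))"

lemma fwd_cong: "(\<And>k. k \<le> i \<Longrightarrow> Q k = Q' k) \<Longrightarrow> fwd m N Q X i = fwd m N Q' X i"
  by (induction i) auto

lemma fwd_restr_layers: "i \<le> j \<Longrightarrow> fwd m N (restr_layers j Q) X i = fwd m N Q X i"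
  by (rule fwd_cong) (auto simp: restr_layers_def)

lemma qnet_set_pmf_above:
  "Q \<in> set_pmf (qnet \<delta> m N W X al i) \<Longrightarrow> k > i \<Longrightarrow> Q k = (\<lambda>_ _. 0)"
proof (induction i arbitrary: Q)
  case 0
  then show ?case by simp
next
  case (Suc i)
  from Suc.prems(1) obtain Q0 M where "Q0 \<in> set_pmf (qnet \<delta> m N W X al i)" "Q = Q0(Suc i := M)"
    by auto
  then show ?case using Suc.IH Suc.prems(2) by auto
qed

lemma map_pmf_restr_layers_qnet:
  "i \<le> L \<Longrightarrow> map_pmf (restr_layers i) (qnet \<delta> m N W X al L) = qnet \<delta> m N W X al i"
proof (induction L)
  case 0
  then have "restr_layers i (\<lambda>_ _ _. 0) = (\<lambda>_ _ _. 0)" by (auto simp: restr_layers_def fun_eq_iff)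
  then show ?case using 0 by simp
next
  case (Suc L)
  show ?case
  proof (cases "i = Suc L")
    case True
    have "map_pmf (restr_layers i) (qnet \<delta> m N W X al (Suc L)) = map_pmf id (qnet \<delta> m N W X al (Suc L))"
    proof (rule map_pmf_cong[OF refl])
      fix Q assume "Q \<in> set_pmf (qnet \<delta> m N W X al (Suc L))"
      from qnet_set_pmf_above[OF this] show "restr_layers i Q = id Q"
        unfolding restr_layers_def True by (auto simp: fun_eq_iff)
    qed
    then show ?thesis using True by simp
  next
    case False
    then have iL: "i \<le> L" using Suc.prems by simp
    have "(\<lambda>M. restr_layers i (Q(Suc L := M))) = (\<lambda>M. restr_layers i Q)" for Q
      using iL by (auto simp: restr_layers_def fun_eq_iff)
    then have "map_pmf (restr_layers i) (qnet \<delta> m N W X al (Suc L))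
        = bind_pmf (qnet \<delta> m N W X al L) (\<lambda>Q. return_pmf (restr_layers i Q))"
      by (simp add: map_bind_pmf map_pmf_comp)
    also have "\<dots> = map_pmf (restr_layers i) (qnet \<delta> m N W X al L)"
      by (simp add: map_pmf_def)
    finally have "map_pmf (restr_layers i) (qnet \<delta> m N W X al (Suc L))
        = map_pmf (restr_layers i) (qnet \<delta> m N W X al L)" .
    then show ?thesis using Suc.IH[OF iL] by simp
  qed
qed

lemma qnet_set_pmf_extend:
  assumes "i \<le> L" "Q \<in> set_pmf (qnet \<delta> m N W X al i)"
  obtains Q' where "Q' \<in> set_pmf (qnet \<delta> m N W X al L)" "\<And>k. k \<le> i \<Longrightarrow> Q k = Q' k"
proof -
  have "Q \<in> restr_layers i ` set_pmf (qnet \<delta> m N W X al L)"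
    using assms map_pmf_restr_layers_qnet[OF assms(1), of \<delta> m N W X al] by (metis set_map_pmf)
  then show ?thesis using that by (auto simp: restr_layers_def)
qed

lemma qnet_prob_restr_layers:
  assumes "i \<le> L" "restr_layers i -` S = S"
  shows "measure_pmf.prob (qnet \<delta> m N W X al L) S = measure_pmf.prob (qnet \<delta> m N W X al i) S"
proof -
  have "measure_pmf.prob (qnet \<delta> m N W X al L) S
      = measure_pmf.prob (map_pmf (restr_layers i) (qnet \<delta> m N W X al L)) S"
    by (simp add: assms(2))
  then show ?thesis by (simp only: map_pmf_restr_layers_qnet[OF assms(1)])
qed

lemma emeasure_bind_pmf_le:
  assumes "\<And>x. x \<in> set_pmf M \<Longrightarrow> emeasure (measure_pmf (f x)) A \<le> indicator B x + ennreal c"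
  shows "emeasure (measure_pmf (bind_pmf M f)) A \<le> emeasure (measure_pmf M) B + ennreal c"
proof -
  have "emeasure (measure_pmf (bind_pmf M f)) A = (\<integral>\<^sup>+x. emeasure (measure_pmf (f x)) A \<partial>M)"
    by simp
  also have "\<dots> \<le> (\<integral>\<^sup>+x. indicator B x + ennreal c \<partial>M)"
    by (intro nn_integral_mono_AE AE_pmfI assms)
  also have "\<dots> = emeasure (measure_pmf M) B + ennreal c"
    by (subst nn_integral_add) (auto simp: measure_pmf.emeasure_space_1)
  finally show ?thesis .
qed

definition layer_bad :: "nat \<Rightarrow> nat \<Rightarrow> mat \<Rightarrow> (nat \<Rightarrow> vec) \<Rightarrow> real \<Rightarrow> nat \<Rightarrow> mat set" where
  "layer_bad m n Yt wcols t c = {M. \<exists>j<c. t < quant_err m n Yt (wcols j) (col M j)}"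

lemma layer_bad_Suc_vimage:
  assumes "M0 \<notin> layer_bad m n Yt wcols t c"
  shows "(\<lambda>q l j. if j = c then q l else M0 l j) -` layer_bad m n Yt wcols t (Suc c)
           = {q. t < quant_err m n Yt (wcols c) q}"
proof -
  have "col (\<lambda>l j. if j = c then q l else M0 l j) j = (if j = c then q else col M0 j)" for q j
    by (auto simp: col_def)
  then show ?thesis using assms unfolding layer_bad_def by (auto simp: less_Suc_eq)
qed

lemma layer_q_bad_prob:
  assumes "\<And>j. j < c \<Longrightarrow>
      measure_pmf.prob (phase2 \<delta> m n Yt (wcols j)) {q. t < quant_err m n Yt (wcols j) q} \<le> \<beta>"
    and \<beta>: "\<beta> \<ge> 0"
  shows "measure_pmf.prob (layer_q \<delta> m n Yt wcols c) (layer_bad m n Yt wcols t c) \<le> real c * \<beta>"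
  using assms(1)
proof (induction c)
  case 0
  then show ?case by (simp add: layer_bad_def)
next
  case (Suc c)
  let ?B = "layer_bad m n Yt wcols t c"
  let ?E = "{q. t < quant_err m n Yt (wcols c) q}"
  let ?ins = "\<lambda>M0 q l j. if j = c then q l else M0 l j"
  have "emeasure (measure_pmf (layer_q \<delta> m n Yt wcols (Suc c))) (layer_bad m n Yt wcols t (Suc c))
      \<le> emeasure (measure_pmf (layer_q \<delta> m n Yt wcols c)) ?B + ennreal \<beta>"
    unfolding layer_q.simps
  proof (rule emeasure_bind_pmf_le)
    fix M0
    show "emeasure (measure_pmf (map_pmf (?ins M0) (phase2 \<delta> m n Yt (wcols c))))
            (layer_bad m n Yt wcols t (Suc c)) \<le> indicator ?B M0 + ennreal \<beta>"
    proof (cases "M0 \<in> ?B")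
      case True
      have "emeasure (measure_pmf (map_pmf (?ins M0) (phase2 \<delta> m n Yt (wcols c))))
            (layer_bad m n Yt wcols t (Suc c)) \<le> 1" by (rule measure_pmf.emeasure_le_1)
      also have "\<dots> \<le> indicator ?B M0 + ennreal \<beta>" using True by simp
      finally show ?thesis .
    next
      case False
      then have "?ins M0 -` layer_bad m n Yt wcols t (Suc c) = ?E"
        by (rule layer_bad_Suc_vimage)
      then have "emeasure (measure_pmf (map_pmf (?ins M0) (phase2 \<delta> m n Yt (wcols c))))
            (layer_bad m n Yt wcols t (Suc c)) = ennreal (measure_pmf.prob (phase2 \<delta> m n Yt (wcols c)) ?E)"
        by (simp add: measure_pmf.emeasure_eq_measure)
      also have "\<dots> \<le> ennreal \<beta>" using Suc.prems[of c] by (intro ennreal_leI) simp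
      finally show ?thesis using False by simp
    qed
  qed
  also have "\<dots> \<le> ennreal (real c * \<beta>) + ennreal \<beta>"
    using Suc.IH Suc.prems by (simp add: measure_pmf.emeasure_eq_measure ennreal_leI)
  also have "\<dots> = ennreal (real (Suc c) * \<beta>)"
    using \<beta> by (simp add: ennreal_plus[symmetric] algebra_simps del: ennreal_plus)
  finally show ?case
    using \<beta> by (simp add: measure_pmf.emeasure_eq_measure)
qed

definition qnet_layer_bad :: "real \<Rightarrow> nat \<Rightarrow> (nat \<Rightarrow> nat) \<Rightarrow> (nat \<Rightarrow> mat) \<Rightarrow> mat
    \<Rightarrow> (nat \<Rightarrow> mat \<Rightarrow> mat \<Rightarrow> vec \<Rightarrow> vec) \<Rightarrow> nat \<Rightarrow> nat \<Rightarrow> (nat \<Rightarrow> mat) set" where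
  "qnet_layer_bad \<delta> m N W X al p i = {Q. Q (Suc i) \<in> layer_bad m (N i) (fwd m N Q X i)
      (\<lambda>j. al (N i) (fwd m N W X i) (fwd m N Q X i) (col (W (Suc i)) j))
      (quant_thr \<delta> p m (N i) (fwd m N Q X i)) (N (Suc i))}"

text \<open>The event only depends on the first Suc i layers, so it may be measured under qnet (Suc i); there,
  given the earlier layers, the columns of layer Suc i are independent Phase II runs.\<close>
lemma qnet_layer_bad_prob:
  assumes d: "\<delta> > 0" and iL: "Suc i \<le> L" and Ni: "N i > 0"
    and nz: "\<forall>Q\<in>set_pmf (qnet \<delta> m N W X al L). nonzero_cols m (N i) (fwd m N Q X i)"
  shows "measure_pmf.prob (qnet \<delta> m N W X al L) (qnet_layer_bad \<delta> m N W X al p i)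
           \<le> real (N (Suc i)) * (sqrt 2 * real m / real (N i) ^ p)"
proof -
  let ?bad = "qnet_layer_bad \<delta> m N W X al p i"
  let ?\<beta> = "sqrt 2 * real m / real (N i) ^ p"
  have "restr_layers (Suc i) Q \<in> ?bad \<longleftrightarrow> Q \<in> ?bad" for Q
    unfolding qnet_layer_bad_def using fwd_restr_layers[of i "Suc i" m N Q X]
    by (simp add: restr_layers_def)
  then have "restr_layers (Suc i) -` ?bad = ?bad" by auto
  then have "measure_pmf.prob (qnet \<delta> m N W X al L) ?bad
      = measure_pmf.prob (qnet \<delta> m N W X al (Suc i)) ?bad"
    by (rule qnet_prob_restr_layers[OF iL])
  also have "\<dots> \<le> real (N (Suc i)) * ?\<beta>"
  proof -
    have "emeasure (measure_pmf (qnet \<delta> m N W X al (Suc i))) ?bad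
        \<le> emeasure (measure_pmf (qnet \<delta> m N W X al i)) {} + ennreal (real (N (Suc i)) * ?\<beta>)"
      unfolding qnet.simps
    proof (rule emeasure_bind_pmf_le)
      fix Q assume Q: "Q \<in> set_pmf (qnet \<delta> m N W X al i)"
      obtain Q' where "Q' \<in> set_pmf (qnet \<delta> m N W X al L)" "\<And>k. k \<le> i \<Longrightarrow> Q k = Q' k"
        using qnet_set_pmf_extend[OF _ Q, of L] iL by auto
      then have nzQ: "nonzero_cols m (N i) (fwd m N Q X i)"
        using nz fwd_cong[of i Q Q' m N X] by auto
      let ?Yt = "fwd m N Q X i"
      let ?wc = "\<lambda>j. al (N i) (fwd m N W X i) ?Yt (col (W (Suc i)) j)"
      have "fwd m N (Q(Suc i := M)) X i = ?Yt" for M by (intro fwd_cong) auto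
      then have "(\<lambda>M. Q(Suc i := M)) -` ?bad = layer_bad m (N i) ?Yt ?wc (quant_thr \<delta> p m (N i) ?Yt) (N (Suc i))"
        unfolding qnet_layer_bad_def by auto
      then have "emeasure (measure_pmf (map_pmf (\<lambda>M. Q(Suc i := M))
                   (layer_q \<delta> m (N i) ?Yt ?wc (N (Suc i))))) ?bad
          = ennreal (measure_pmf.prob (layer_q \<delta> m (N i) ?Yt ?wc (N (Suc i)))
                 (layer_bad m (N i) ?Yt ?wc (quant_thr \<delta> p m (N i) ?Yt) (N (Suc i))))"
        by (simp add: measure_pmf.emeasure_eq_measure)
      also have "\<dots> \<le> ennreal (real (N (Suc i)) * ?\<beta>)"
        by (intro ennreal_leI layer_q_bad_prob phase2_tail[OF d Ni nzQ]) simp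
      finally show "emeasure (measure_pmf (map_pmf (\<lambda>M. Q(Suc i := M))
                   (layer_q \<delta> m (N i) ?Yt ?wc (N (Suc i))))) ?bad
            \<le> indicator {} Q + ennreal (real (N (Suc i)) * ?\<beta>)" by simp
    qed
    then show ?thesis by (simp add: measure_pmf.emeasure_eq_measure ennreal_le_iff)
  qed
  finally show ?thesis .
qed

section \<open>Alignment errors\<close>

definition align_err :: "nat \<Rightarrow> nat \<Rightarrow> mat \<Rightarrow> mat \<Rightarrow> vec \<Rightarrow> vec \<Rightarrow> real" where
  "align_err m n Y Yt w wt = vnorm m (\<lambda>k. (\<Sum>l<n. Y k l * w l) - (\<Sum>l<n. Yt k l * wt l))"

lemma perfect_aligned_align_err:
  assumes "perfect_aligned m n Y Yt w wt"
  shows "align_err m n Y Yt w wt = 0"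
proof -
  have "align_err m n Y Yt w wt = vnorm m (\<lambda>_. 0)"
    using assms unfolding align_err_def perfect_aligned_def align_feasible_def
    by (intro vnorm_cong) simp
  then show ?thesis by simp
qed

lemma sum_mult_fun_upd:
  fixes a f :: "nat \<Rightarrow> real"
  assumes "j < n"
  shows "(\<Sum>l<n. a l * (f(j := c)) l) = (\<Sum>l<n. a l * f l) + a j * (c - f j)"
proof -
  have "(\<Sum>l<n. a l * (f(j := c)) l) = (\<Sum>l<n. a l * f l + (if l = j then a j * (c - f j) else 0))"
    by (intro sum.cong) (auto simp: algebra_simps)
  also have "\<dots> = (\<Sum>l<n. a l * f l) + a j * (c - f j)"
    using assms by (simp add: sum.distrib)
  finally show ?thesis .
qed

lemma ord_align_steps_residual:
  assumes n: "n > 0"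
  shows "snd (ord_align_steps m n Y Yt w t)
           = (\<lambda>k. \<Sum>l<min t n. Y k l * w l - Yt k l * fst (ord_align_steps m n Y Yt w t) l)"
proof (induction t)
  case 0
  then show ?case by simp
next
  case (Suc t)
  obtain wt u where st: "ord_align_steps m n Y Yt w t = (wt, u)" by force
  have IH: "u = (\<lambda>k. \<Sum>l<min t n. Y k l * w l - Yt k l * wt l)" using Suc.IH st by simp
  show ?case
  proof (cases "t < n")
    case True
    define c where "c = (\<Sum>k<m. Yt k t * (u k + w t * Y k t)) / (\<Sum>k<m. (Yt k t)\<^sup>2)"
    have e: "ord_align_steps m n Y Yt w (Suc t) = (wt(t := c), \<lambda>k. u k + w t * Y k t - c * Yt k t)"
      using True by (simp add: st Let_def c_def)
    have "(\<Sum>l<t. Y k l * w l - Yt k l * (wt(t := c)) l) = (\<Sum>l<t. Y k l * w l - Yt k l * wt l)" for k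
      by (intro sum.cong) auto
    then show ?thesis using True IH unfolding e by (auto simp: algebra_simps fun_eq_iff)
  next
    case False
    define j where "j = t mod n"
    have j: "j < n" unfolding j_def using n by simp
    define v where "v = (\<lambda>k. u k - w j * Y k j + wt j * Yt k j)"
    define c where "c = (\<Sum>k<m. Yt k j * (v k + w j * Y k j)) / (\<Sum>k<m. (Yt k j)\<^sup>2)"
    have e: "ord_align_steps m n Y Yt w (Suc t) = (wt(j := c), \<lambda>k. v k + w j * Y k j - c * Yt k j)"
      using False by (simp add: st Let_def c_def v_def j_def)
    have mn: "min (Suc t) n = n" "min t n = n" using False by auto
    have "(\<Sum>l<n. Y k l * w l - Yt k l * (wt(j := c)) l) = v k + w j * Y k j - c * Yt k j" for k
      using sum_mult_fun_upd[OF j, of "\<lambda>l. Yt k l" wt c] IH mn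
      by (simp add: sum_subtractf v_def algebra_simps)
    then show ?thesis unfolding e mn by auto
  qed
qed

text \<open>Each first-pass step is an orthogonal projection of u_{t-1} + w_t (Y_t - Yt_t) away from Yt_t.\<close>
lemma ord_align_first_pass_le:
  assumes nz: "nonzero_cols m n Yt" and t: "t \<le> n"
  shows "vnorm m (snd (ord_align_steps m n Y Yt w t))
           \<le> (\<Sum>l<t. \<bar>w l\<bar> * vnorm m (\<lambda>k. Y k l - Yt k l))"
  using t
proof (induction t)
  case 0
  then show ?case by (simp add: vnorm_def)
next
  case (Suc t)
  obtain wt u where st: "ord_align_steps m n Y Yt w t = (wt, u)" by force
  have t: "t < n" using Suc.prems by simp
  define y where "y = col Yt t"
  have S: "vinner m y y > 0" unfolding y_def by (rule nonzero_cols_vinner_pos[OF nz t])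
  define c where "c = (\<Sum>k<m. Yt k t * (u k + w t * Y k t)) / (\<Sum>k<m. (Yt k t)\<^sup>2)"
  have e: "snd (ord_align_steps m n Y Yt w (Suc t)) = (\<lambda>k. u k + w t * Y k t - c * Yt k t)"
    using t by (simp add: st Let_def c_def)
  define x where "x = (\<lambda>k. u k + w t * (Y k t - Yt k t))"
  have c: "c = vinner m y (\<lambda>k. u k + w t * Y k t) / vinner m y y"
    unfolding c_def y_def vinner_col_self by (simp add: vinner_def col_def)
  have "vinner m y x = vinner m y (\<lambda>k. u k + w t * Y k t) - w t * vinner m y y"
    unfolding x_def y_def col_def vinner_def
    by (simp add: algebra_simps sum_subtractf sum.distrib sum_distrib_left)
  then have q: "vinner m y x / vinner m y y = c - w t" unfolding c using S by (simp add: field_simps)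
  have "(\<lambda>k. u k + w t * Y k t - c * Yt k t) = (\<lambda>k. x k - vinner m y x / vinner m y y * y k)"
    unfolding q by (simp add: x_def y_def col_def algebra_simps)
  then have "vnorm m (snd (ord_align_steps m n Y Yt w (Suc t))) \<le> vnorm m x"
    unfolding e using vnorm_proj_le[OF S] by simp
  also have "\<dots> \<le> vnorm m u + \<bar>w t\<bar> * vnorm m (\<lambda>k. Y k t - Yt k t)"
    unfolding x_def using vnorm_triangle[of m u "\<lambda>k. w t * (Y k t - Yt k t)"]
    by (simp only: vnorm_scale)
  also have "\<dots> \<le> (\<Sum>l<Suc t. \<bar>w l\<bar> * vnorm m (\<lambda>k. Y k l - Yt k l))"
    using Suc st by simp
  finally show ?case .
qed

lemma ord_align_later_pass:
  assumes nz: "nonzero_cols m n Yt" and s: "s \<ge> 1" and t: "t \<le> n" and k: "k < m"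
  shows "snd (ord_align_steps m n Y Yt w (s * n + t)) k
           = matvec m (prod_proj m Yt t) (snd (ord_align_steps m n Y Yt w (s * n))) k"
  using t k
proof (induction t arbitrary: k)
  case 0
  then show ?case by (simp add: matvec_id)
next
  case (Suc t)
  have t: "t < n" using Suc.prems by simp
  obtain wt u where st: "ord_align_steps m n Y Yt w (s * n + t) = (wt, u)" by force
  define y where "y = col Yt t"
  have S: "vinner m y y > 0" unfolding y_def by (rule nonzero_cols_vinner_pos[OF nz t])
  have "n \<le> s * n" using s by simp
  then have later: "\<not> s * n + t < n" by linarith
  have md: "(s * n + t) mod n = t" "t mod n = t" using t by simp_all
  define v where "v = (\<lambda>k. u k - w t * Y k t + wt t * Yt k t)"
  define c where "c = (\<Sum>k<m. Yt k t * (v k + w t * Y k t)) / (\<Sum>k<m. (Yt k t)\<^sup>2)"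
  have e: "snd (ord_align_steps m n Y Yt w (s * n + Suc t)) = (\<lambda>k. v k + w t * Y k t - c * Yt k t)"
    using later by (simp add: st Let_def c_def v_def md)
  have "(\<Sum>k<m. Yt k t * (v k + w t * Y k t)) = vinner m y u + wt t * vinner m y y"
    unfolding v_def y_def vinner_def col_def
    by (simp add: algebra_simps sum.distrib sum_distrib_left)
  then have c: "c = vinner m y u / vinner m y y + wt t"
    using S unfolding c_def y_def vinner_col_self[symmetric] by (simp add: add_divide_distrib)
  have "snd (ord_align_steps m n Y Yt w (s * n + Suc t)) k = u k - vinner m y u / vinner m y y * y k"
    unfolding e c v_def y_def col_def by (simp add: algebra_simps)
  also have "\<dots> = matvec m (proj_perp m y) u k" using Suc.prems by (simp add: matvec_proj_perp)
  also have "matvec m (proj_perp m y) u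
      = matvec m (proj_perp m y) (matvec m (prod_proj m Yt t) (snd (ord_align_steps m n Y Yt w (s * n))))"
    using Suc.IH t st by (intro matvec_cong) simp
  also have "\<dots> = matvec m (prod_proj m Yt (Suc t)) (snd (ord_align_steps m n Y Yt w (s * n)))"
    by (simp add: matvec_matmul y_def)
  finally show ?case .
qed

lemma ord_align_err_le:
  assumes n: "n > 0" and r: "r \<ge> 1" and nz: "nonzero_cols m n Yt"
    and w: "\<forall>l<n. \<bar>w l\<bar> \<le> B"
    and D: "\<forall>l<n. vnorm m (\<lambda>k. Y k l - Yt k l) \<le> D"
  shows "align_err m n Y Yt w (ord_align r m n Y Yt w)
           \<le> opnorm2 m (prod_proj m Yt n) ^ (r - 1) * (real n * B * D)"
proof -
  define U where "U = (\<lambda>s. snd (ord_align_steps m n Y Yt w (s * n)))"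
  define P where "P = opnorm2 m (prod_proj m Yt n)"
  have P: "P \<ge> 0" unfolding P_def by (rule opnorm2_nonneg)
  have U: "vnorm m (U (Suc s)) \<le> P ^ s * (real n * B * D)" for s
  proof (induction s)
    case 0
    have "vnorm m (U 1) \<le> (\<Sum>l<n. \<bar>w l\<bar> * vnorm m (\<lambda>k. Y k l - Yt k l))"
      unfolding U_def using ord_align_first_pass_le[OF nz order.refl] by simp
    also have "\<dots> \<le> (\<Sum>l<n. B * D)"
      using w D by (intro sum_mono mult_mono) (auto simp: vnorm_nonneg order.trans[OF abs_ge_zero])
    finally show ?case by simp
  next
    case (Suc s)
    have "vnorm m (U (Suc (Suc s))) = vnorm m (matvec m (prod_proj m Yt n) (U (Suc s)))"
      unfolding U_def using ord_align_later_pass[OF nz _ order.refl, of "Suc s"]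
      by (intro vnorm_cong) (simp add: add.commute)
    also have "\<dots> \<le> P * vnorm m (U (Suc s))" unfolding P_def by (rule vnorm_matvec_le)
    also have "\<dots> \<le> P * (P ^ s * (real n * B * D))" using Suc P by (intro mult_left_mono) auto
    finally show ?case by simp
  qed
  have "min (r * n) n = n" using r by simp
  then have "align_err m n Y Yt w (ord_align r m n Y Yt w) = vnorm m (U r)"
    unfolding align_err_def U_def ord_align_def ord_align_steps_residual[OF n]
    by (simp add: sum_subtractf)
  also have "\<dots> \<le> P ^ (r - 1) * (real n * B * D)" using U[of "r - 1"] r by simp
  finally show ?thesis unfolding P_def .
qed

section \<open>Error propagation through the layers\<close>

definition fwd_err :: "nat \<Rightarrow> (nat \<Rightarrow> nat) \<Rightarrow> (nat \<Rightarrow> mat) \<Rightarrow> (nat \<Rightarrow> mat) \<Rightarrow> mat \<Rightarrow> nat \<Rightarrow> real" where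
  "fwd_err m N W Q X i = max_col_norm m (N i) (\<lambda>k l. fwd m N W X i k l - fwd m N Q X i k l)"

lemma net_err_eq_fwd_err: "net_err m N W Q X L = fwd_err m N W Q X L"
  unfolding net_err_def fwd_err_def max_col_norm_def col_def ..

lemma fwd_err_0:
  assumes "N 0 > 0"
  shows "fwd_err m N W Q X 0 = 0"
proof -
  have "fwd_err m N W Q X 0 \<le> 0"
    unfolding fwd_err_def by (rule max_col_norm_le[OF assms]) (simp add: col_def)
  moreover have "fwd_err m N W Q X 0 \<ge> 0"
    unfolding fwd_err_def by (rule max_col_norm_nonneg[OF assms])
  ultimately show ?thesis by simp
qed

lemma max_col_norm_fwd_le:
  assumes "N i > 0"
  shows "max_col_norm m (N i) (fwd m N Q X i) \<le> max_col_norm m (N i) (fwd m N W X i) + fwd_err m N W Q X i"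
proof (rule max_col_norm_le[OF assms])
  fix j assume j: "j < N i"
  let ?D = "\<lambda>k l. fwd m N W X i k l - fwd m N Q X i k l"
  have "vnorm m (col (fwd m N Q X i) j) = vnorm m (\<lambda>k. col (fwd m N W X i) j k + - col ?D j k)"
    by (simp add: col_def)
  also have "\<dots> \<le> vnorm m (col (fwd m N W X i) j) + vnorm m (col ?D j)"
    using vnorm_triangle[of m "col (fwd m N W X i) j" "\<lambda>k. - col ?D j k"] by (simp add: vnorm_minus)
  also have "\<dots> \<le> max_col_norm m (N i) (fwd m N W X i) + fwd_err m N W Q X i"
    unfolding fwd_err_def using j by (intro add_mono max_col_norm_ge)
  finally show "vnorm m (col (fwd m N Q X i) j) \<le> max_col_norm m (N i) (fwd m N W X i) + fwd_err m N W Q X i" .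
qed

text \<open>ReLU is 1-Lipschitz, so the pre-activation error of each column bounds its error.\<close>
lemma fwd_err_Suc_le:
  assumes N: "N (Suc i) > 0"
    and good: "Q \<notin> qnet_layer_bad \<delta> m N W X al p i"
    and align: "\<And>j. j < N (Suc i) \<Longrightarrow> align_err m (N i) (fwd m N W X i) (fwd m N Q X i)
       (col (W (Suc i)) j) (al (N i) (fwd m N W X i) (fwd m N Q X i) (col (W (Suc i)) j)) \<le> E"
  shows "fwd_err m N W Q X (Suc i) \<le> E + quant_thr \<delta> p m (N i) (fwd m N Q X i)"
  unfolding fwd_err_def
proof (rule max_col_norm_le[OF N])
  fix j assume j: "j < N (Suc i)"
  let ?Y = "fwd m N W X i" and ?Yt = "fwd m N Q X i"
  let ?a = "al (N i) ?Y ?Yt (col (W (Suc i)) j)"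
  define e1 where "e1 = (\<lambda>k. (\<Sum>l<N i. ?Y k l * W (Suc i) l j) - (\<Sum>l<N i. ?Yt k l * ?a l))"
  define e2 where "e2 = (\<lambda>k. \<Sum>l<N i. ?Yt k l * (?a l - Q (Suc i) l j))"
  have "vnorm m (col (\<lambda>k l. fwd m N W X (Suc i) k l - fwd m N Q X (Suc i) k l) j)
      \<le> vnorm m (\<lambda>k. e1 k + e2 k)"
  proof (rule vnorm_mono_abs)
    fix k
    have "e1 k + e2 k = (\<Sum>l<N i. ?Y k l * W (Suc i) l j) - (\<Sum>l<N i. ?Yt k l * Q (Suc i) l j)"
      unfolding e1_def e2_def by (simp add: right_diff_distrib sum_subtractf)
    then show "\<bar>col (\<lambda>k l. fwd m N W X (Suc i) k l - fwd m N Q X (Suc i) k l) j k\<bar> \<le> \<bar>e1 k + e2 k\<bar>"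
      unfolding col_def using relu_dist_le by simp
  qed
  also have "\<dots> \<le> vnorm m e1 + vnorm m e2" by (rule vnorm_triangle)
  also have "\<dots> \<le> E + quant_thr \<delta> p m (N i) ?Yt"
  proof (rule add_mono)
    show "vnorm m e1 \<le> E" using align[OF j] unfolding align_err_def e1_def by (simp add: col_def)
    have "\<not> quant_thr \<delta> p m (N i) ?Yt < quant_err m (N i) ?Yt ?a (col (Q (Suc i)) j)"
      using good j unfolding qnet_layer_bad_def layer_bad_def by auto
    then show "vnorm m e2 \<le> quant_thr \<delta> p m (N i) ?Yt"
      unfolding quant_err_def e2_def col_def by simp
  qed
  finally show "vnorm m (col (\<lambda>k l. fwd m N W X (Suc i) k l - fwd m N Q X (Suc i) k l) j)
      \<le> E + quant_thr \<delta> p m (N i) ?Yt" .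
qed

lemma fwd_err_le_recursion:
  assumes d: "\<delta> > 0" and dims: "\<forall>i\<le>L. N i > 0"
    and good: "\<And>i. i < L \<Longrightarrow> Q \<notin> qnet_layer_bad \<delta> m N W X al p i"
    and align: "\<And>i j. i < L \<Longrightarrow> j < N (Suc i) \<Longrightarrow> align_err m (N i) (fwd m N W X i) (fwd m N Q X i)
       (col (W (Suc i)) j) (al (N i) (fwd m N W X i) (fwd m N Q X i) (col (W (Suc i)) j))
         \<le> B i * fwd_err m N W Q X i"
    and B: "\<And>i. i < L \<Longrightarrow> B i \<ge> 0"
    and T0: "T 0 \<ge> 0"
    and T: "\<And>i. i < L \<Longrightarrow> B i * T i + \<delta> * sqrt (2 * pi * real p * real m * ln (real (N i)))
              * (max_col_norm m (N i) (fwd m N W X i) + T i) \<le> T (Suc i)"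
    and i: "i \<le> L"
  shows "fwd_err m N W Q X i \<le> T i"
  using i
proof (induction i)
  case 0
  then show ?case using fwd_err_0 dims T0 by simp
next
  case (Suc i)
  then have i: "i < L" by simp
  let ?c = "\<delta> * sqrt (2 * pi * real p * real m * ln (real (N i)))"
  have c: "?c \<ge> 0" using d dims i by (simp add: Suc_leI)
  have "fwd_err m N W Q X (Suc i) \<le> B i * fwd_err m N W Q X i + quant_thr \<delta> p m (N i) (fwd m N Q X i)"
  proof (rule fwd_err_Suc_le[where al = al and E = "B i * fwd_err m N W Q X i"])
    show "N (Suc i) > 0" using dims i by simp
  qed (use good[OF i] align[OF i] in simp_all)
  moreover have "quant_thr \<delta> p m (N i) (fwd m N Q X i)
      \<le> ?c * (max_col_norm m (N i) (fwd m N W X i) + fwd_err m N W Q X i)"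
    unfolding quant_thr_def using max_col_norm_fwd_le[of N i m Q X W] dims i c
    by (intro mult_left_mono) auto
  moreover have "B i * fwd_err m N W Q X i \<le> B i * T i"
    using Suc B[OF i] i by (intro mult_left_mono) auto
  moreover have "?c * (max_col_norm m (N i) (fwd m N W X i) + fwd_err m N W Q X i)
      \<le> ?c * (max_col_norm m (N i) (fwd m N W X i) + T i)"
    using Suc c i by (intro mult_left_mono) auto
  ultimately show ?case using T[OF i] by linarith
qed

lemma prob_ge_one_minus_sum:
  fixes L :: nat
  assumes "\<forall>Q\<in>set_pmf M. Q \<notin> G \<longrightarrow> (\<exists>i<L. Q \<in> B i)"
  shows "measure_pmf.prob M G \<ge> 1 - (\<Sum>i<L. measure_pmf.prob M (B i))"
proof -
  have "measure_pmf.prob M (UNIV - G) = measure_pmf.prob M ((UNIV - G) \<inter> set_pmf M)"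
    by (simp add: measure_Int_set_pmf)
  also have "\<dots> \<le> measure_pmf.prob M (\<Union>i<L. B i)"
    using assms by (intro measure_pmf.finite_measure_mono) auto
  also have "\<dots> \<le> (\<Sum>i<L. measure_pmf.prob M (B i))"
    by (rule measure_pmf.finite_measure_subadditive_finite) auto
  finally show ?thesis using measure_pmf.prob_compl[of G M] by simp
qed

lemma qnet_error_prob:
  fixes B T :: "(nat \<Rightarrow> mat) \<Rightarrow> nat \<Rightarrow> real"
  assumes d: "\<delta> > 0" and dims: "\<forall>i\<le>L. N i > 0"
    and nz: "\<And>Q i. Q \<in> set_pmf (qnet \<delta> m N W X al L) \<Longrightarrow> i < L \<Longrightarrow> nonzero_cols m (N i) (fwd m N Q X i)"
    and align: "\<And>Q i j. Q \<in> set_pmf (qnet \<delta> m N W X al L) \<Longrightarrow> i < L \<Longrightarrow> j < N (Suc i) \<Longrightarrow>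
       align_err m (N i) (fwd m N W X i) (fwd m N Q X i)
         (col (W (Suc i)) j) (al (N i) (fwd m N W X i) (fwd m N Q X i) (col (W (Suc i)) j))
         \<le> B Q i * fwd_err m N W Q X i"
    and B: "\<And>Q i. i < L \<Longrightarrow> B Q i \<ge> 0"
    and T0: "\<And>Q. T Q 0 \<ge> 0"
    and T: "\<And>Q i. i < L \<Longrightarrow> B Q i * T Q i + \<delta> * sqrt (2 * pi * real p * real m * ln (real (N i)))
              * (max_col_norm m (N i) (fwd m N W X i) + T Q i) \<le> T Q (Suc i)"
  shows "measure_pmf.prob (qnet \<delta> m N W X al L) {Q. net_err m N W Q X L \<le> T Q L}
           \<ge> 1 - (\<Sum>i\<in>{1..L}. sqrt 2 * real m * real (N i) / real (N (i - 1)) ^ p)"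
proof -
  let ?M = "qnet \<delta> m N W X al L"
  let ?bad = "qnet_layer_bad \<delta> m N W X al p"
  have "\<forall>Q\<in>set_pmf ?M. Q \<notin> {Q. net_err m N W Q X L \<le> T Q L} \<longrightarrow> (\<exists>i<L. Q \<in> ?bad i)"
  proof (intro ballI impI, rule ccontr)
    fix Q assume Q: "Q \<in> set_pmf ?M" "Q \<notin> {Q. net_err m N W Q X L \<le> T Q L}" "\<not> (\<exists>i<L. Q \<in> ?bad i)"
    have "fwd_err m N W Q X L \<le> T Q L"
      by (rule fwd_err_le_recursion[where al = al and B = "B Q" and T = "T Q", OF d dims])
        (use Q(3) align[OF Q(1)] B T0 T in auto)
    then show False using Q(2) by (simp add: net_err_eq_fwd_err)
  qed
  then have "measure_pmf.prob ?M {Q. net_err m N W Q X L \<le> T Q L}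
      \<ge> 1 - (\<Sum>i<L. measure_pmf.prob ?M (?bad i))"
    by (rule prob_ge_one_minus_sum)
  moreover have "(\<Sum>i<L. measure_pmf.prob ?M (?bad i))
      \<le> (\<Sum>i<L. real (N (Suc i)) * (sqrt 2 * real m / real (N i) ^ p))"
    using nz dims by (intro sum_mono qnet_layer_bad_prob[OF d]) auto
  moreover have "(\<Sum>i<L. real (N (Suc i)) * (sqrt 2 * real m / real (N i) ^ p))
      = (\<Sum>i\<in>{1..L}. sqrt 2 * real m * real (N i) / real (N (i - 1)) ^ p)"
    using sum.atLeast1_atMost_eq[of "\<lambda>i. sqrt 2 * real m * real (N i) / real (N (i - 1)) ^ p" L]
    by (simp add: ac_simps)
  ultimately show ?thesis by linarith
qed

section \<open>Perfect and order-r alignment\<close>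

lemma sum_powr_sqrt_prod_lessThan_Suc:
  fixes \<kappa> :: real and a A :: "nat \<Rightarrow> real"
  assumes \<kappa>: "\<kappa> \<ge> 0"
  shows "(\<Sum>j<Suc i. \<kappa> powr (real (Suc i - j) / 2) * sqrt (\<Prod>k\<in>{j..<Suc i}. a k) * A j)
       = sqrt \<kappa> * sqrt (a i) * (A i + (\<Sum>j<i. \<kappa> powr (real (i - j) / 2) * sqrt (\<Prod>k\<in>{j..<i}. a k) * A j))"
proof -
  have shift: "\<kappa> powr (real (Suc i - j) / 2) * sqrt (\<Prod>k\<in>{j..<Suc i}. a k) * A j
      = sqrt \<kappa> * sqrt (a i) * (\<kappa> powr (real (i - j) / 2) * sqrt (\<Prod>k\<in>{j..<i}. a k) * A j)"
    if j: "j < i" for j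
  proof -
    have "\<kappa> powr (real (Suc i - j) / 2) = \<kappa> powr (1/2 + real (i - j) / 2)"
      using j by (simp add: of_nat_diff field_simps)
    also have "\<dots> = sqrt \<kappa> * \<kappa> powr (real (i - j) / 2)"
      using \<kappa> by (simp add: powr_add powr_half_sqrt)
    finally show ?thesis
      using j by (simp add: prod.atLeastLessThan_Suc real_sqrt_mult ac_simps)
  qed
  have "(\<Sum>j<i. \<kappa> powr (real (Suc i - j) / 2) * sqrt (\<Prod>k\<in>{j..<Suc i}. a k) * A j)
      = (\<Sum>j<i. sqrt \<kappa> * sqrt (a i) * (\<kappa> powr (real (i - j) / 2) * sqrt (\<Prod>k\<in>{j..<i}. a k) * A j))"
    by (rule sum.cong[OF refl], rule shift) simp
  then show ?thesis using \<kappa> by (simp add: sum_distrib_left powr_half_sqrt algebra_simps)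
qed

lemma sum_mult_prod_lessThan_Suc:
  fixes c A B :: "nat \<Rightarrow> real"
  shows "(\<Sum>j<Suc i. c j * A j * (\<Prod>k\<in>{j+1..<Suc i}. B k + c k))
       = c i * A i + (B i + c i) * (\<Sum>j<i. c j * A j * (\<Prod>k\<in>{j+1..<i}. B k + c k))"
proof -
  have "(\<Sum>j<i. c j * A j * (\<Prod>k\<in>{j+1..<Suc i}. B k + c k))
      = (\<Sum>j<i. (B i + c i) * (c j * A j * (\<Prod>k\<in>{j+1..<i}. B k + c k)))"
    by (intro sum.cong) (simp_all add: prod.atLeastLessThan_Suc ac_simps)
  then show ?thesis by (simp add: sum_distrib_left)
qed

lemma qnet_perfect_align_error_prob:
  fixes sel :: "nat \<Rightarrow> mat \<Rightarrow> mat \<Rightarrow> vec \<Rightarrow> vec"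
  assumes d: "\<delta> > 0" and dims: "\<forall>i\<le>L. N i > 0"
    and sel: "\<And>n Y Yt w. \<exists>z. align_feasible m n Y Yt w z \<Longrightarrow> perfect_aligned m n Y Yt w (sel n Y Yt w)"
    and support: "\<And>Q i. Q \<in> set_pmf (qnet \<delta> m N W X sel L) \<Longrightarrow> i < L \<Longrightarrow>
          nonzero_cols m (N i) (fwd m N Q X i) \<and>
          (\<forall>j<N (Suc i). \<exists>z. align_feasible m (N i) (fwd m N W X i) (fwd m N Q X i) (col (W (Suc i)) j) z)"
  shows "measure_pmf.prob (qnet \<delta> m N W X sel L)
        {Q. net_err m N W Q X L \<le>
            (\<Sum>i<L. (2 * pi * real p * real m * \<delta>\<^sup>2) powr (real (L - i) / 2)
                     * sqrt (\<Prod>k\<in>{i..<L}. ln (real (N k)))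
                     * max_col_norm m (N i) (fwd m N W X i))}
      \<ge> 1 - (\<Sum>i\<in>{1..L}. sqrt 2 * real m * real (N i) / real (N (i - 1)) ^ p)"
proof -
  define \<kappa> where "\<kappa> = 2 * pi * real p * real m * \<delta>\<^sup>2"
  define A where "A i = max_col_norm m (N i) (fwd m N W X i)" for i
  define T where "T i = (\<Sum>j<i. \<kappa> powr (real (i - j) / 2) * sqrt (\<Prod>k\<in>{j..<i}. ln (real (N k))) * A j)"
    for i
  have T: "0 * T i + \<delta> * sqrt (2 * pi * real p * real m * ln (real (N i))) * (A i + T i) \<le> T (Suc i)" for i
  proof -
    have "T (Suc i) = sqrt \<kappa> * sqrt (ln (real (N i))) * (A i + T i)"
      unfolding T_def by (rule sum_powr_sqrt_prod_lessThan_Suc) (simp add: \<kappa>_def)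
    moreover have "sqrt \<kappa> * sqrt (ln (real (N i))) = \<delta> * sqrt (2 * pi * real p * real m * ln (real (N i)))"
      unfolding \<kappa>_def using d by (simp add: real_sqrt_mult ac_simps)
    ultimately show ?thesis by simp
  qed
  have "measure_pmf.prob (qnet \<delta> m N W X sel L) {Q. net_err m N W Q X L \<le> T L}
      \<ge> 1 - (\<Sum>i\<in>{1..L}. sqrt 2 * real m * real (N i) / real (N (i - 1)) ^ p)"
  proof (rule qnet_error_prob[OF d dims, where B = "\<lambda>_ _. 0" and T = "\<lambda>_. T"])
    fix Q i j assume Q: "Q \<in> set_pmf (qnet \<delta> m N W X sel L)" and i: "i < L" and j: "j < N (Suc i)"
    then have "perfect_aligned m (N i) (fwd m N W X i) (fwd m N Q X i) (col (W (Suc i)) j)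
        (sel (N i) (fwd m N W X i) (fwd m N Q X i) (col (W (Suc i)) j))"
      using support[OF Q i] by (intro sel) blast
    then show "align_err m (N i) (fwd m N W X i) (fwd m N Q X i) (col (W (Suc i)) j)
        (sel (N i) (fwd m N W X i) (fwd m N Q X i) (col (W (Suc i)) j)) \<le> 0 * fwd_err m N W Q X i"
      by (simp add: perfect_aligned_align_err)
  qed (use support T[unfolded A_def] in \<open>auto simp: T_def\<close>)
  then show ?thesis unfolding T_def \<kappa>_def A_def .
qed

lemma ord_align_layer_err_le:
  assumes N: "N i > 0" and r: "r \<ge> 1" and nz: "nonzero_cols m (N i) (fwd m N Q X i)"
    and j: "j < N (Suc i)"
  shows "align_err m (N i) (fwd m N W X i) (fwd m N Q X i) (col (W (Suc i)) j)
          (ord_align r m (N i) (fwd m N W X i) (fwd m N Q X i) (col (W (Suc i)) j))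
      \<le> real (N i) * max_abs (N i) (N (Suc i)) (W (Suc i))
          * opnorm2 m (prod_proj m (fwd m N Q X i) (N i)) ^ (r - 1) * fwd_err m N W Q X i"
proof -
  have "align_err m (N i) (fwd m N W X i) (fwd m N Q X i) (col (W (Suc i)) j)
        (ord_align r m (N i) (fwd m N W X i) (fwd m N Q X i) (col (W (Suc i)) j))
      \<le> opnorm2 m (prod_proj m (fwd m N Q X i) (N i)) ^ (r - 1)
        * (real (N i) * max_abs (N i) (N (Suc i)) (W (Suc i)) * fwd_err m N W Q X i)"
  proof (rule ord_align_err_le[OF N r nz])
    show "\<forall>l<N i. \<bar>col (W (Suc i)) j l\<bar> \<le> max_abs (N i) (N (Suc i)) (W (Suc i))"
      using j by (simp add: col_def max_abs_ge)
    show "\<forall>l<N i. vnorm m (\<lambda>k. fwd m N W X i k l - fwd m N Q X i k l) \<le> fwd_err m N W Q X i"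
      using max_col_norm_ge[of _ "N i" m "\<lambda>k l. fwd m N W X i k l - fwd m N Q X i k l"]
      unfolding fwd_err_def col_def by simp
  qed
  then show ?thesis by (simp add: ac_simps)
qed

lemma qnet_ord_align_error_prob:
  assumes d: "\<delta> > 0" and dims: "\<forall>i\<le>L. N i > 0" and r: "r \<ge> 1"
    and nz: "\<And>Q i. Q \<in> set_pmf (qnet \<delta> m N W X (ord_align r m) L) \<Longrightarrow> i < L \<Longrightarrow>
          nonzero_cols m (N i) (fwd m N Q X i)"
  shows "measure_pmf.prob (qnet \<delta> m N W X (ord_align r m) L)
        {Q. net_err m N W Q X L \<le>
            (\<Sum>i<L. \<delta> * sqrt (2 * pi * real p * real m * ln (real (N i)))
                     * max_col_norm m (N i) (fwd m N W X i)
                     * (\<Prod>k\<in>{i+1..<L}.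
                          real (N k) * max_abs (N k) (N (Suc k)) (W (Suc k))
                            * opnorm2 m (prod_proj m (fwd m N Q X k) (N k)) ^ (r - 1)
                          + \<delta> * sqrt (2 * pi * real p * real m * ln (real (N k)))))}
      \<ge> 1 - (\<Sum>i\<in>{1..L}. sqrt 2 * real m * real (N i) / real (N (i - 1)) ^ p)"
proof -
  define c where "c i = \<delta> * sqrt (2 * pi * real p * real m * ln (real (N i)))" for i
  define A where "A i = max_col_norm m (N i) (fwd m N W X i)" for i
  define B where "B Q k = real (N k) * max_abs (N k) (N (Suc k)) (W (Suc k))
                           * opnorm2 m (prod_proj m (fwd m N Q X k) (N k)) ^ (r - 1)" for Q k
  define T where "T Q i = (\<Sum>j<i. c j * A j * (\<Prod>k\<in>{j+1..<i}. B Q k + c k))" for Q i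
  have T0: "T Q 0 \<ge> 0" for Q
    unfolding T_def by simp
  have T: "B Q i * T Q i + c i * (A i + T Q i) \<le> T Q (Suc i)" for Q i
    unfolding T_def sum_mult_prod_lessThan_Suc by (simp add: algebra_simps)
  have B: "B Q i \<ge> 0" if "i < L" for Q i
    unfolding B_def using that dims max_abs_nonneg[of "N i" "N (Suc i)"] opnorm2_nonneg by simp
  have align: "align_err m (N i) (fwd m N W X i) (fwd m N Q X i) (col (W (Suc i)) j)
        (ord_align r m (N i) (fwd m N W X i) (fwd m N Q X i) (col (W (Suc i)) j))
      \<le> B Q i * fwd_err m N W Q X i"
    if "Q \<in> set_pmf (qnet \<delta> m N W X (ord_align r m) L)" "i < L" "j < N (Suc i)" for Q i j
    unfolding B_def using that dims by (intro ord_align_layer_err_le r nz) auto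
  have "measure_pmf.prob (qnet \<delta> m N W X (ord_align r m) L) {Q. net_err m N W Q X L \<le> T Q L}
      \<ge> 1 - (\<Sum>i\<in>{1..L}. sqrt 2 * real m * real (N i) / real (N (i - 1)) ^ p)"
    by (rule qnet_error_prob[OF d dims nz align B T0 T[unfolded c_def A_def]])
  then show ?thesis unfolding T_def c_def A_def B_def .
qed

theorem mainTheorem5:
  fixes m L r p :: nat and N :: "nat \<Rightarrow> nat" and W :: "nat \<Rightarrow> mat" and X :: mat
    and \<delta> :: real and sel :: "nat \<Rightarrow> mat \<Rightarrow> mat \<Rightarrow> vec \<Rightarrow> vec"
  assumes dims: "\<forall>i\<le>L. N i > 0"
    and delta: "\<delta> > 0"
  shows
  "((\<forall>n Y Yt w. (\<exists>z. align_feasible m n Y Yt w z) \<longrightarrow> perfect_aligned m n Y Yt w (sel n Y Yt w))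
     \<and> (\<forall>Q\<in>set_pmf (qnet \<delta> m N W X sel L). \<forall>i<L.
          nonzero_cols m (N i) (fwd m N Q X i) \<and>
          (\<forall>j<N (Suc i). \<exists>z. align_feasible m (N i) (fwd m N W X i) (fwd m N Q X i) (col (W (Suc i)) j) z))
   \<longrightarrow> measure_pmf.prob (qnet \<delta> m N W X sel L)
        {Q. net_err m N W Q X L \<le>
            (\<Sum>i<L. (2 * pi * real p * real m * \<delta>\<^sup>2) powr (real (L - i) / 2)
                     * sqrt (\<Prod>k\<in>{i..<L}. ln (real (N k)))
                     * max_col_norm m (N i) (fwd m N W X i))}
      \<ge> 1 - (\<Sum>i\<in>{1..L}. sqrt 2 * real m * real (N i) / real (N (i - 1)) ^ p))
  \<and>
  ((r \<ge> 1 \<and> (\<forall>Q\<in>set_pmf (qnet \<delta> m N W X (ord_align r m) L). \<forall>i<L.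
          nonzero_cols m (N i) (fwd m N Q X i)))
   \<longrightarrow> measure_pmf.prob (qnet \<delta> m N W X (ord_align r m) L)
        {Q. net_err m N W Q X L \<le>
            (\<Sum>i<L. \<delta> * sqrt (2 * pi * real p * real m * ln (real (N i)))
                     * max_col_norm m (N i) (fwd m N W X i)
                     * (\<Prod>k\<in>{i+1..<L}.
                          real (N k) * max_abs (N k) (N (Suc k)) (W (Suc k))
                            * opnorm2 m (prod_proj m (fwd m N Q X k) (N k)) ^ (r - 1)
                          + \<delta> * sqrt (2 * pi * real p * real m * ln (real (N k)))))}
      \<ge> 1 - (\<Sum>i\<in>{1..L}. sqrt 2 * real m * real (N i) / real (N (i - 1)) ^ p))"
  using qnet_perfect_align_error_prob[OF delta dims, where sel=sel and m=m and W=W and X=X and p=p]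
    qnet_ord_align_error_prob[OF delta dims, where r=r and m=m and W=W and X=X and p=p]
  by blast

end
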